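(* Let $R$ be an integral domain with a language $\mathcal{L}$ which is the language of rings $\{0,1,+,\cdot\}$ possibly with extra constants and relations, and suppose Hilbert's tenth problem over $(R,\mathcal{L})$ has a positive answer. Let $K$ be the fraction field of $R$, $\overline K$ its algebraic closure, and let $\alpha\in\overline K$ be integral over $R$ with minimal equation having coefficients in $R_0=S_c'(\mathcal{L})$. Let $\mathcal{L}_\alpha=\mathcal{L}\cup\{c_\alpha,\mathrm{In}R\}$ with $c_\alpha$ a constant and $\mathrm{In}R$ a unary relation, interpreted on $R[\alpha]$ by: $+,\cdot$ the usual operations; each constant $c$ of $\mathcal{L}$ as in $R$; each relation $S$ of $\mathcal{L}$ as the same set as in $R$; $c_\alpha$ as $\alpha$; and $\mathrm{In}R(x)$ iff $x\in R$. Then Hilbert's tenth problem over $(R[\alpha],\mathcal{L}_\alpha)$ has a positive answer.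
   Context: For a set $R$ with language $\mathcal{L}$ (constants, functions, relations incl. $0$ and $=$), a basic formula has the form $(t_1,\dots,t_m)\in S$ with $S$ a relation of $\mathcal{L}$ or equality and $t_j$ terms built from constants and variables via the functions; $S\subset R^k$ is Diophantine if $S=\{\vec x\mid\exists\vec y\ (f_1\wedge\dots\wedge f_r)\}$ for basic formulas $f_i$. $S_c'(\mathcal{L})=\{x\in R\mid\{x\}\text{ is Diophantine}\}$. Hilbert's tenth problem has a positive answer over $(R,\mathcal{L})$ if there is an algorithm that decides, for any finite conjunction of basic formulas with coefficients from $S_c'(\mathcal{L})$ (given via a recursive ring of such coefficients), whether it has a solution in $R$. *)

theory Defs
  imports "HOL-Computational_Algebra.Polynomial" "HOL-Library.Nat_Bijection"
begin

datatype recf = Zr | Sc | Proj nat | Comp recf "recf list" | Prim recf recf | Mn recf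

inductive rf_eval :: "recf \<Rightarrow> nat list \<Rightarrow> nat \<Rightarrow> bool" where
  zr: "rf_eval Zr xs 0"
| sc: "rf_eval Sc (x # xs) (Suc x)"
| proj: "i < length xs \<Longrightarrow> rf_eval (Proj i) xs (xs ! i)"
| comp: "list_all2 (\<lambda>g y. rf_eval g xs y) gs ys \<Longrightarrow> rf_eval f ys z \<Longrightarrow> rf_eval (Comp f gs) xs z"
| prim0: "rf_eval f xs y \<Longrightarrow> rf_eval (Prim f g) (0 # xs) y"
| primS: "rf_eval (Prim f g) (n # xs) y \<Longrightarrow> rf_eval g (n # y # xs) z
           \<Longrightarrow> rf_eval (Prim f g) (Suc n # xs) z"
| mn: "rf_eval f (n # xs) 0 \<Longrightarrow> (\<forall>m<n. \<exists>y. 0 < y \<and> rf_eval f (m # xs) y)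
           \<Longrightarrow> rf_eval (Mn f) xs n"

definition decidable_nat_set :: "nat set \<Rightarrow> bool" where
  "decidable_nat_set D \<longleftrightarrow> (\<exists>c. \<forall>n. rf_eval c [n] (if n \<in> D then 1 else 0))"

datatype tm = Var nat | TZero | TOne | Cst nat | Add tm tm | Mul tm tm

datatype bf = Eq tm tm | Rel nat "tm list"

primrec tm_eval :: "(nat \<Rightarrow> 'a::comm_ring_1) \<Rightarrow> (nat \<Rightarrow> 'a) \<Rightarrow> tm \<Rightarrow> 'a" where
  "tm_eval cst v (Var n) = v n"
| "tm_eval cst v TZero = 0"
| "tm_eval cst v TOne = 1"
| "tm_eval cst v (Cst i) = cst i"
| "tm_eval cst v (Add s t) = tm_eval cst v s + tm_eval cst v t"
| "tm_eval cst v (Mul s t) = tm_eval cst v s * tm_eval cst v t"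

fun bf_holds :: "(nat \<Rightarrow> 'a::comm_ring_1) \<Rightarrow> (nat \<Rightarrow> 'a list set) \<Rightarrow> (nat \<Rightarrow> 'a) \<Rightarrow> bf \<Rightarrow> bool" where
  "bf_holds cst rel v (Eq s t) \<longleftrightarrow> tm_eval cst v s = tm_eval cst v t"
| "bf_holds cst rel v (Rel r ts) \<longleftrightarrow> map (tm_eval cst v) ts \<in> rel r"

definition solvable :: "'a::comm_ring_1 set \<Rightarrow> (nat \<Rightarrow> 'a) \<Rightarrow> (nat \<Rightarrow> 'a list set) \<Rightarrow> bf list \<Rightarrow> bool" where
  "solvable A cst rel fs \<longleftrightarrow> (\<exists>v. (\<forall>n. v n \<in> A) \<and> (\<forall>f\<in>set fs. bf_holds cst rel v f))"

primrec enc_tm :: "tm \<Rightarrow> nat" where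
  "enc_tm (Var n) = list_encode [0, n]"
| "enc_tm TZero = list_encode [1]"
| "enc_tm TOne = list_encode [2]"
| "enc_tm (Cst i) = list_encode [3, i]"
| "enc_tm (Add s t) = list_encode [4, enc_tm s, enc_tm t]"
| "enc_tm (Mul s t) = list_encode [5, enc_tm s, enc_tm t]"

fun enc_bf :: "bf \<Rightarrow> nat" where
  "enc_bf (Eq s t) = list_encode [0, enc_tm s, enc_tm t]"
| "enc_bf (Rel r ts) = list_encode (1 # r # map enc_tm ts)"

definition enc_sys :: "bf list \<Rightarrow> nat" where
  "enc_sys fs = list_encode (map enc_bf fs)"

definition H10_positive :: "'a::comm_ring_1 set \<Rightarrow> (nat \<Rightarrow> 'a) \<Rightarrow> (nat \<Rightarrow> 'a list set) \<Rightarrow> bool" where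
  "H10_positive A cst rel \<longleftrightarrow> decidable_nat_set {enc_sys fs | fs. solvable A cst rel fs}"

definition Sc' :: "'a::comm_ring_1 set \<Rightarrow> (nat \<Rightarrow> 'a) \<Rightarrow> (nat \<Rightarrow> 'a list set) \<Rightarrow> 'a set" where
  "Sc' A cst rel = {x \<in> A. \<exists>fs. \<forall>y\<in>A. (y = x \<longleftrightarrow>
      (\<exists>v. (\<forall>n. v n \<in> A) \<and> v 0 = y \<and> (\<forall>f\<in>set fs. bf_holds cst rel v f)))}"

definition frac_field :: "'a::field set \<Rightarrow> 'a set" where
  "frac_field R = {a / b | a b. a \<in> R \<and> b \<in> R \<and> b \<noteq> 0}"

definition adjoin :: "'a::field set \<Rightarrow> 'a \<Rightarrow> 'a set" where
  "adjoin R \<alpha> = {poly p \<alpha> | p. \<forall>i. coeff p i \<in> R}"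

text \<open>Constant 0 of L_alpha is c_alpha; constant Suc i is the i-th constant of L.\<close>
definition cst_alpha :: "'a \<Rightarrow> (nat \<Rightarrow> 'a) \<Rightarrow> nat \<Rightarrow> 'a" where
  "cst_alpha \<alpha> cst i = (case i of 0 \<Rightarrow> \<alpha> | Suc j \<Rightarrow> cst j)"

text \<open>Relation 0 of L_alpha is InR; relation Suc i is the i-th relation of L.\<close>
definition rel_alpha :: "'a set \<Rightarrow> (nat \<Rightarrow> 'a list set) \<Rightarrow> nat \<Rightarrow> 'a list set" where
  "rel_alpha R rel i = (case i of 0 \<Rightarrow> {[x] | x. x \<in> R} | Suc j \<Rightarrow> rel j)"

end

theory Submission
  imports Defs
begin

text \<open>Since \<open>p\<close> is monic with coefficients in \<open>R\<close> and minimal over the fraction field, every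
  element of \<open>R[\<alpha>]\<close> is \<open>\<Sum>i<d. r\<^sub>i \<alpha>\<^sup>i\<close> with unique coordinates \<open>r\<^sub>i \<in> R\<close>, \<open>d = degree p\<close>.
  A system over \<open>R[\<alpha>]\<close> therefore becomes a system over \<open>R\<close> with \<open>d\<close> unknowns per unknown:
  sums are taken coordinatewise, products are reduced with the coordinates of the powers
  \<open>\<alpha>\<^sup>m\<close> (\<open>m \<le> 2d\<close>), \<open>x \<in> R\<close> says that the higher coordinates of \<open>x\<close> vanish, and a relation
  of the language holds iff the higher coordinates vanish and it holds for the zeroth ones.
  The coordinates of \<open>\<alpha>\<^sup>m\<close> are polynomials in the coefficients of \<open>p\<close>, which are Diophantine
  singletons; so an auxiliary system pins them down.  The translation is primitive recursive on
  Goedel codes, hence a decision procedure for \<open>R\<close> yields one for \<open>R[\<alpha>]\<close>.\<close>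

section \<open>Computable functions\<close>

definition computable :: "nat \<Rightarrow> (nat list \<Rightarrow> nat) \<Rightarrow> bool" where
  "computable k f \<longleftrightarrow> (\<exists>c. \<forall>xs. length xs = k \<longrightarrow> rf_eval c xs (f xs))"

definition computable_pred :: "nat \<Rightarrow> (nat list \<Rightarrow> bool) \<Rightarrow> bool" where
  "computable_pred k P \<longleftrightarrow> computable k (\<lambda>xs. of_bool (P xs))"

lemma computable_cong:
  "computable k f \<Longrightarrow> (\<And>xs. length xs = k \<Longrightarrow> f xs = g xs) \<Longrightarrow> computable k g"
  unfolding computable_def by metis

lemma computable_zero: "computable k (\<lambda>xs. 0)"
  unfolding computable_def using rf_eval.zr by blast

lemma computable_proj: "i < k \<Longrightarrow> computable k (\<lambda>xs. xs ! i)"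
  unfolding computable_def using rf_eval.proj by metis

lemma computable_comp:
  assumes "computable (length gs) h" and "\<forall>g\<in>set gs. computable k g"
  shows "computable k (\<lambda>xs. h (map (\<lambda>g. g xs) gs))"
proof -
  let ?computes = "\<lambda>c g. \<forall>xs. length xs = k \<longrightarrow> rf_eval c xs (g xs)"
  have "\<exists>cs. list_all2 ?computes cs gs"
    using assms(2)
  proof (induction gs)
    case (Cons g gs)
    then obtain cs c where "list_all2 ?computes cs gs" "?computes c g"
      unfolding computable_def by auto
    then show ?case by (intro exI[of _ "c # cs"]) auto
  qed simp
  then obtain cs where cs: "list_all2 ?computes cs gs" ..
  obtain ch where ch: "\<forall>ys. length ys = length gs \<longrightarrow> rf_eval ch ys (h ys)"
    using assms(1) unfolding computable_def by blast
  have "rf_eval (Comp ch cs) xs (h (map (\<lambda>g. g xs) gs))" if "length xs = k" for xs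
  proof (rule rf_eval.comp)
    show "list_all2 (\<lambda>c y. rf_eval c xs y) cs (map (\<lambda>g. g xs) gs)"
      using cs that by (auto simp: list_all2_map2 elim: list_all2_mono)
  qed (use ch in simp)
  then show ?thesis unfolding computable_def by blast
qed

lemma computable_comp1: "computable 1 h \<Longrightarrow> computable k f \<Longrightarrow> computable k (\<lambda>xs. h [f xs])"
  using computable_comp[of "[f]" h k] by simp

lemma computable_comp2:
  "computable 2 h \<Longrightarrow> computable k f \<Longrightarrow> computable k g \<Longrightarrow> computable k (\<lambda>xs. h [f xs, g xs])"
  using computable_comp[of "[f, g]" h k] by (simp add: numeral_2_eq_2)

lemma computable_unary:
  "computable 1 (\<lambda>xs. h (xs ! 0)) \<Longrightarrow> computable k f \<Longrightarrow> computable k (\<lambda>xs. h (f xs))"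
  using computable_comp1 by fastforce

lemma computable_binary:
  "computable 2 (\<lambda>xs. h (xs ! 0) (xs ! 1)) \<Longrightarrow> computable k f \<Longrightarrow> computable k g
    \<Longrightarrow> computable k (\<lambda>xs. h (f xs) (g xs))"
  using computable_comp2 by fastforce

lemma computable_Suc: "computable k f \<Longrightarrow> computable k (\<lambda>xs. Suc (f xs))"
proof (rule computable_unary[where h=Suc])
  have "rf_eval Sc xs (Suc (xs ! 0))" if "length xs = 1" for xs
    using that rf_eval.sc by (cases xs) auto
  then show "computable 1 (\<lambda>xs. Suc (xs ! 0))"
    unfolding computable_def by blast
qed

lemma computable_const: "computable k (\<lambda>xs. c)"
  by (induction c) (auto intro!: computable_zero computable_Suc)

fun prim_rec :: "(nat list \<Rightarrow> nat) \<Rightarrow> (nat list \<Rightarrow> nat) \<Rightarrow> nat \<Rightarrow> nat list \<Rightarrow> nat" where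
  "prim_rec f g 0 ys = f ys"
| "prim_rec f g (Suc n) ys = g (n # prim_rec f g n ys # ys)"

lemma computable_prim_rec:
  assumes "computable k f" and "computable (Suc (Suc k)) g"
    and h: "\<And>n ys. length ys = k \<Longrightarrow> h (n # ys) = prim_rec f g n ys"
  shows "computable (Suc k) h"
proof -
  obtain cf where cf: "\<forall>xs. length xs = k \<longrightarrow> rf_eval cf xs (f xs)"
    using assms(1) unfolding computable_def by blast
  obtain cg where cg: "\<forall>xs. length xs = Suc (Suc k) \<longrightarrow> rf_eval cg xs (g xs)"
    using assms(2) unfolding computable_def by blast
  have Prim: "rf_eval (Prim cf cg) (n # ys) (prim_rec f g n ys)" if "length ys = k" for n ys
  proof (induction n)
    case 0
    show ?case using cf that by (simp add: rf_eval.prim0)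
  next
    case (Suc n)
    then show ?case using cg that by (simp add: rf_eval.primS)
  qed
  have "rf_eval (Prim cf cg) xs (h xs)" if "length xs = Suc k" for xs
    using that Prim h by (cases xs) auto
  then show ?thesis unfolding computable_def by blast
qed

lemma computable_minimize:
  assumes "computable (Suc k) f" and "\<And>ys. length ys = k \<Longrightarrow> \<exists>n. f (n # ys) = 0"
  shows "computable k (\<lambda>ys. LEAST n. f (n # ys) = 0)"
proof -
  obtain cf where cf: "\<forall>xs. length xs = Suc k \<longrightarrow> rf_eval cf xs (f xs)"
    using assms(1) unfolding computable_def by blast
  have "rf_eval (Mn cf) ys (LEAST n. f (n # ys) = 0)" if ys: "length ys = k" for ys
  proof (rule rf_eval.mn)
    let ?n = "LEAST n. f (n # ys) = 0"
    have "f (?n # ys) = 0" by (rule LeastI_ex) (rule assms(2)[OF ys])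
    with cf ys show "rf_eval cf (?n # ys) 0" by (metis length_Cons)
    show "\<forall>m<?n. \<exists>y. 0 < y \<and> rf_eval cf (m # ys) y"
    proof (intro allI impI)
      fix m assume "m < ?n"
      then have "f (m # ys) \<noteq> 0" by (rule not_less_Least)
      with cf ys show "\<exists>y. 0 < y \<and> rf_eval cf (m # ys) y" by auto
    qed
  qed
  then show ?thesis unfolding computable_def by blast
qed

lemma computable_add: "computable k f \<Longrightarrow> computable k g \<Longrightarrow> computable k (\<lambda>xs. f xs + g xs)"
proof (rule computable_binary[where h="(+)"])
  have "prim_rec (\<lambda>ys. ys ! 0) (\<lambda>zs. Suc (zs ! 1)) n ys = n + ys ! 0" for n ys
    by (induction n) auto
  then have "computable (Suc 1) (\<lambda>xs. xs ! 0 + xs ! 1)"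
    by (intro computable_prim_rec[of 1 "\<lambda>ys. ys ! 0" "\<lambda>zs. Suc (zs ! 1)"])
       (auto intro!: computable_proj computable_Suc)
  then show "computable 2 (\<lambda>xs. xs ! 0 + xs ! 1)" by (simp add: numeral_2_eq_2)
qed

lemma computable_mult: "computable k f \<Longrightarrow> computable k g \<Longrightarrow> computable k (\<lambda>xs. f xs * g xs)"
proof (rule computable_binary[where h="(*)"])
  have "prim_rec (\<lambda>ys. 0) (\<lambda>zs. zs ! 1 + zs ! 2) n ys = n * ys ! 0" for n ys
    by (induction n) auto
  then have "computable (Suc 1) (\<lambda>xs. xs ! 0 * xs ! 1)"
    by (intro computable_prim_rec[of 1 "\<lambda>ys. 0" "\<lambda>zs. zs ! 1 + zs ! 2"]
        computable_zero computable_add computable_proj) simp_all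
  then show "computable 2 (\<lambda>xs. xs ! 0 * xs ! 1)" by (simp add: numeral_2_eq_2)
qed

lemma computable_diff: "computable k f \<Longrightarrow> computable k g \<Longrightarrow> computable k (\<lambda>xs. f xs - g xs)"
proof -
  have "prim_rec (\<lambda>ys. 0) (\<lambda>zs. zs ! 0) n ys = n - 1" for n ys
    by (induction n) auto
  then have "computable (Suc 0) (\<lambda>xs. xs ! 0 - 1)"
    by (intro computable_prim_rec[of 0 "\<lambda>ys. 0" "\<lambda>zs. zs ! 0"])
       (auto intro!: computable_proj computable_zero)
  then have pred: "computable 1 (\<lambda>xs. xs ! 0 - 1)" by simp
  have "prim_rec (\<lambda>ys. ys ! 0) (\<lambda>zs. zs ! 1 - 1) n ys = ys ! 0 - n" for n ys
    by (induction n) auto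
  then have "computable (Suc 1) (\<lambda>xs. xs ! 1 - xs ! 0)"
    by (intro computable_prim_rec[of 1 "\<lambda>ys. ys ! 0" "\<lambda>zs. zs ! 1 - 1"]
        computable_unary[OF pred] computable_proj) simp_all
  then have "computable 2 (\<lambda>xs. xs ! 1 - xs ! 0)" by (simp add: numeral_2_eq_2)
  then show "computable k f \<Longrightarrow> computable k g \<Longrightarrow> ?thesis"
    using computable_comp2[of "\<lambda>xs. xs ! 1 - xs ! 0" k g f] by simp
qed

lemma computable_if:
  "computable_pred k P \<Longrightarrow> computable k f \<Longrightarrow> computable k g
    \<Longrightarrow> computable k (\<lambda>xs. if P xs then f xs else g xs)"
  unfolding computable_pred_def
  by (rule computable_cong[of k "\<lambda>xs. f xs * of_bool (P xs) + g xs * (1 - of_bool (P xs))"])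
     (auto intro!: computable_mult computable_add computable_diff computable_const)

lemma computable_pred_less:
  "computable k f \<Longrightarrow> computable k g \<Longrightarrow> computable_pred k (\<lambda>xs. f xs < g xs)"
  unfolding computable_pred_def
  by (rule computable_cong[of k "\<lambda>xs. 1 - (1 - (g xs - f xs))"])
     (auto intro!: computable_diff computable_const)

lemma computable_pred_eq:
  "computable k f \<Longrightarrow> computable k g \<Longrightarrow> computable_pred k (\<lambda>xs. f xs = g xs)"
  unfolding computable_pred_def
  by (rule computable_cong[of k "\<lambda>xs. 1 - ((f xs - g xs) + (g xs - f xs))"])
     (auto intro!: computable_diff computable_add computable_const)

lemma computable_pred_not: "computable_pred k P \<Longrightarrow> computable_pred k (\<lambda>xs. \<not> P xs)"
  unfolding computable_pred_def
  by (rule computable_cong[of k "\<lambda>xs. 1 - of_bool (P xs)"]) (auto intro!: computable_diff computable_const)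

lemma computable_pred_conj:
  "computable_pred k P \<Longrightarrow> computable_pred k Q \<Longrightarrow> computable_pred k (\<lambda>xs. P xs \<and> Q xs)"
  unfolding computable_pred_def
  by (rule computable_cong[of k "\<lambda>xs. of_bool (P xs) * of_bool (Q xs)"]) (auto intro!: computable_mult)

lemma computable_funpow:
  assumes "computable 1 (\<lambda>xs. h (xs ! 0))" and "computable k a" and "computable k b"
  shows "computable k (\<lambda>xs. (h ^^ a xs) (b xs))"
proof (rule computable_binary[where h="\<lambda>a b. (h ^^ a) b", OF _ assms(2,3)])
  have "prim_rec (\<lambda>ys. ys ! 0) (\<lambda>zs. h (zs ! 1)) n ys = (h ^^ n) (ys ! 0)" for n ys
    by (induction n) auto
  then have "computable (Suc 1) (\<lambda>xs. (h ^^ (xs ! 0)) (xs ! 1))"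
    by (intro computable_prim_rec[of 1 "\<lambda>ys. ys ! 0" "\<lambda>zs. h (zs ! 1)"])
       (auto intro!: computable_proj computable_unary[OF assms(1)])
  then show "computable 2 (\<lambda>xs. (h ^^ (xs ! 0)) (xs ! 1))" by (simp add: numeral_2_eq_2)
qed

lemma computable_triangle: "computable k f \<Longrightarrow> computable k (\<lambda>xs. triangle (f xs))"
proof (rule computable_unary[where h=triangle])
  have "prim_rec (\<lambda>ys. 0) (\<lambda>zs. zs ! 1 + Suc (zs ! 0)) n ys = triangle n" for n ys
    by (induction n) auto
  then have "computable (Suc 0) (\<lambda>xs. triangle (xs ! 0))"
    by (intro computable_prim_rec[of 0 "\<lambda>ys. 0" "\<lambda>zs. zs ! 1 + Suc (zs ! 0)"])
       (auto intro!: computable_proj computable_zero computable_add computable_Suc)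
  then show "computable 1 (\<lambda>xs. triangle (xs ! 0))" by simp
qed

lemma computable_prod_encode:
  "computable k f \<Longrightarrow> computable k g \<Longrightarrow> computable k (\<lambda>xs. prod_encode (f xs, g xs))"
  unfolding prod_encode_def by (auto intro!: computable_add computable_triangle)

lemma prod_decode_Least:
  fixes m :: nat
  defines "s \<equiv> LEAST s. m < triangle (Suc s)"
  shows "prod_decode m = (m - triangle s, s - (m - triangle s))"
proof -
  obtain a b where ab: "prod_decode m = (a, b)" by fastforce
  then have m: "m = triangle (a + b) + a"
    using prod_decode_inverse[of m] by (simp add: prod_encode_def)
  have triangle_mono: "triangle x \<le> triangle y" if "x \<le> y" for x y
    using that by (induction y) (auto simp: le_Suc_eq)
  have "s = a + b" unfolding s_def
  proof (rule Least_equality)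
    fix y assume "m < triangle (Suc y)"
    then show "a + b \<le> y"
      using m triangle_mono[of "Suc y" "a + b"] by linarith
  qed (use m in simp)
  then show ?thesis using ab m by simp
qed

lemma computable_prod_decode:
  assumes "computable k f"
  shows "computable k (\<lambda>xs. fst (prod_decode (f xs)))"
    and "computable k (\<lambda>xs. snd (prod_decode (f xs)))"
proof -
  let ?above = "\<lambda>zs. of_bool (\<not> zs ! 1 < triangle (Suc (zs ! 0))) :: nat"
  have "computable_pred (Suc 1) (\<lambda>zs. \<not> zs ! 1 < triangle (Suc (zs ! 0)))"
    by (intro computable_pred_not computable_pred_less computable_triangle computable_Suc
        computable_proj) simp_all
  then have "computable 1 (\<lambda>ys. LEAST s. ?above (s # ys) = 0)"
    unfolding computable_pred_def
    by (rule computable_minimize) (auto intro: exI[of _ "_ ! 0"] le_imp_less_Suc trans_le_add2)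
  then have s: "computable 1 (\<lambda>xs. LEAST s. xs ! 0 < triangle (Suc s))"
    by simp
  have "computable 1 (\<lambda>xs. xs ! 0 - triangle (LEAST s. xs ! 0 < triangle (Suc s)))"
    by (intro computable_diff computable_proj computable_triangle s) simp
  then show "computable k (\<lambda>xs. fst (prod_decode (f xs)))"
    by (intro computable_unary[OF _ assms]) (simp add: prod_decode_Least)
  have "computable 1 (\<lambda>xs. (LEAST s. xs ! 0 < triangle (Suc s))
                             - (xs ! 0 - triangle (LEAST s. xs ! 0 < triangle (Suc s))))"
    by (intro computable_diff computable_proj computable_triangle s) simp_all
  then show "computable k (\<lambda>xs. snd (prod_decode (f xs)))"
    by (intro computable_unary[OF _ assms]) (simp add: prod_decode_Least)
qed

lemma computable_drop_nth: "d + i < k \<Longrightarrow> computable k (\<lambda>xs. drop d xs ! i)"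
  by (rule computable_cong[OF computable_proj[of "d + i"]]) simp_all

lemma decidable_nat_set_vimage:
  assumes "decidable_nat_set D" and "computable 1 (\<lambda>xs. g (xs ! 0))"
  shows "decidable_nat_set (g -` D)"
proof -
  obtain c where c: "\<And>m. rf_eval c [m] (if m \<in> D then 1 else 0)"
    using assms(1) unfolding decidable_nat_set_def by blast
  obtain cg where cg: "\<And>m. rf_eval cg [m] (g m)"
    using assms(2) unfolding computable_def by (metis length_Cons list.size(3) nth_Cons_0 One_nat_def)
  have "rf_eval (Comp c [cg]) [m] (if m \<in> g -` D then 1 else 0)" for m
    by (rule rf_eval.comp[where ys="[g m]"]) (use c cg in auto)
  then show ?thesis unfolding decidable_nat_set_def by blast
qed

text \<open>Course-of-values recursion: \<open>cov_hist step m ys\<close> is the nested pair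
  \<open>(v (m - 1), (v (m - 2), \<dots> (v 0, 0)))\<close> of all earlier values \<open>v a = cov_rec step a ys\<close>,
  and \<open>hist_lookup m\<close> reads \<open>v a\<close> back from it.\<close>

definition hist_lookup :: "nat \<Rightarrow> nat \<Rightarrow> nat \<Rightarrow> nat" where
  "hist_lookup m H a =
    (if a < m then fst (prod_decode (((\<lambda>x. snd (prod_decode x)) ^^ (m - Suc a)) H)) else 0)"

primrec cov_hist :: "(nat \<Rightarrow> (nat \<Rightarrow> nat) \<Rightarrow> nat list \<Rightarrow> nat) \<Rightarrow> nat \<Rightarrow> nat list \<Rightarrow> nat" where
  "cov_hist step 0 ys = 0"
| "cov_hist step (Suc m) ys =
     prod_encode (step m (hist_lookup m (cov_hist step m ys)) ys, cov_hist step m ys)"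

definition cov_rec :: "(nat \<Rightarrow> (nat \<Rightarrow> nat) \<Rightarrow> nat list \<Rightarrow> nat) \<Rightarrow> nat \<Rightarrow> nat list \<Rightarrow> nat" where
  "cov_rec step m ys = step m (hist_lookup m (cov_hist step m ys)) ys"

lemma hist_lookup_cov_hist:
  "hist_lookup m (cov_hist step m ys) a = (if a < m then cov_rec step a ys else 0)"
proof (induction m)
  case (Suc m)
  show ?case
  proof (cases "a < m")
    case True
    then have "Suc m - Suc a = Suc (m - Suc a)" by simp
    then show ?thesis
      using Suc True by (simp add: hist_lookup_def funpow_Suc_right del: funpow.simps)
  qed (auto simp: hist_lookup_def cov_rec_def less_Suc_eq)
qed (simp add: hist_lookup_def)

lemma cov_rec_unfold: "cov_rec step m ys = step m (\<lambda>a. if a < m then cov_rec step a ys else 0) ys"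
  unfolding cov_rec_def[of step m] hist_lookup_cov_hist[symmetric] ..

lemma computable_hist_lookup:
  "computable k m \<Longrightarrow> computable k H \<Longrightarrow> computable k a
    \<Longrightarrow> computable k (\<lambda>xs. hist_lookup (m xs) (H xs) (a xs))"
  unfolding hist_lookup_def
  by (intro computable_if computable_pred_less computable_prod_decode computable_funpow
      computable_diff computable_Suc computable_const computable_proj; simp)

lemma computable_cov_rec:
  assumes step: "computable (Suc (Suc k))
                   (\<lambda>xs. step (xs ! 0) (hist_lookup (xs ! 0) (xs ! 1)) (drop 2 xs))"
  shows "computable (Suc k) (\<lambda>xs. cov_rec step (hd xs) (tl xs))"
proof -
  let ?S = "\<lambda>xs. step (xs ! 0) (hist_lookup (xs ! 0) (xs ! 1)) (drop 2 xs)"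
  have "prim_rec (\<lambda>ys. 0) (\<lambda>zs. prod_encode (?S zs, zs ! 1)) n ys = cov_hist step n ys" for n ys
    by (induction n) auto
  then have hist: "computable (Suc k) (\<lambda>xs. cov_hist step (hd xs) (tl xs))"
    by (intro computable_prim_rec[of k "\<lambda>ys. 0" "\<lambda>zs. prod_encode (?S zs, zs ! 1)"])
       (use step in \<open>auto intro!: computable_zero computable_prod_encode computable_proj\<close>)
  define gs where
    "gs = (\<lambda>xs. xs ! 0) # (\<lambda>xs. cov_hist step (hd xs) (tl xs)) # map (\<lambda>j xs. xs ! Suc j) [0..<k]"
  have "length gs = Suc (Suc k)" by (simp add: gs_def)
  then have "computable (Suc k) (\<lambda>xs. ?S (map (\<lambda>g. g xs) gs))"
    using step hist by (intro computable_comp) (auto simp: gs_def intro: computable_proj)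
  then show ?thesis
  proof (rule computable_cong)
    fix xs :: "nat list" assume "length xs = Suc k"
    then obtain x ys where xs: "xs = x # ys" "length ys = k" by (cases xs) auto
    then have "map (\<lambda>j. xs ! Suc j) [0..<k] = ys" by (intro nth_equalityI) auto
    then show "?S (map (\<lambda>g. g xs) gs) = cov_rec step (hd xs) (tl xs)"
      using xs by (simp add: gs_def cov_rec_def comp_def)
  qed
qed

section \<open>Coded lists\<close>

definition code_Cons :: "nat \<Rightarrow> nat \<Rightarrow> nat" where
  "code_Cons x L = Suc (prod_encode (x, L))"

definition code_hd :: "nat \<Rightarrow> nat" where
  "code_hd L = fst (prod_decode (L - 1))"

definition code_tl :: "nat \<Rightarrow> nat" where
  "code_tl L = snd (prod_decode (L - 1))"

definition code_nth :: "nat \<Rightarrow> nat \<Rightarrow> nat" where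
  "code_nth L i = code_hd ((code_tl ^^ i) L)"

definition code_prepend :: "nat list \<Rightarrow> nat \<Rightarrow> nat" where
  "code_prepend xs L = foldr code_Cons xs L"

primrec code_length_is :: "nat \<Rightarrow> nat \<Rightarrow> bool" where
  "code_length_is L 0 \<longleftrightarrow> L = 0"
| "code_length_is L (Suc k) \<longleftrightarrow> L \<noteq> 0 \<and> code_length_is (code_tl L) k"

lemma list_encode_Cons: "list_encode (x # xs) = code_Cons x (list_encode xs)"
  by (simp add: code_Cons_def)

declare list_encode.simps(2) [simp del] list_encode_eq [simp]

lemma list_encode_Cons_neq_0 [simp]: "list_encode (x # xs) \<noteq> 0"
  by (simp add: list_encode_Cons code_Cons_def)

lemma code_hd_list_encode [simp]: "code_hd (list_encode (x # xs)) = x"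
  by (simp add: list_encode_Cons code_hd_def code_Cons_def)

lemma code_tl_list_encode [simp]: "code_tl (list_encode (x # xs)) = list_encode xs"
  by (simp add: list_encode_Cons code_tl_def code_Cons_def)

lemma code_Cons_list_encode [simp]: "code_Cons x (list_encode xs) = list_encode (x # xs)"
  by (simp add: list_encode_Cons)

lemma code_Cons_hd_tl: "L \<noteq> 0 \<Longrightarrow> code_Cons (code_hd L) (code_tl L) = L"
  by (simp add: code_Cons_def code_hd_def code_tl_def)

lemma code_hd_less: "L \<noteq> 0 \<Longrightarrow> code_hd L < L"
  using le_prod_encode_1[of "code_hd L" "code_tl L"] code_Cons_hd_tl[of L]
  by (simp add: code_Cons_def)

lemma code_tl_less: "L \<noteq> 0 \<Longrightarrow> code_tl L < L"
  using le_prod_encode_2[of "code_tl L" "code_hd L"] code_Cons_hd_tl[of L]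
  by (simp add: code_Cons_def)

lemma code_nth_list_encode [simp]: "i < length xs \<Longrightarrow> code_nth (list_encode xs) i = xs ! i"
proof (induction xs arbitrary: i)
  case (Cons x xs)
  then show ?case
    by (cases i) (simp_all add: code_nth_def funpow_Suc_right del: funpow.simps)
qed simp

lemma nth_less_list_encode: "i < length xs \<Longrightarrow> xs ! i < list_encode xs"
proof (induction xs arbitrary: i)
  case (Cons x xs)
  then show ?case
    using code_hd_less[of "list_encode (x # xs)"] code_tl_less[of "list_encode (x # xs)"]
    by (cases i) fastforce+
qed simp

lemma less_list_encode_Cons_Cons [simp]:
  "x < list_encode (a # x # xs)" "y < list_encode (a # x # y # xs)"
  using nth_less_list_encode[of 1 "a # x # xs"] nth_less_list_encode[of 2 "a # x # y # xs"]
  by simp_all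

lemma code_length_is_list_encode [simp]: "code_length_is (list_encode xs) k \<longleftrightarrow> length xs = k"
  by (induction xs arbitrary: k) (case_tac k; simp)+

lemma code_length_isD: "code_length_is L k \<Longrightarrow> L = list_encode (map (code_nth L) [0..<k])"
proof (induction k arbitrary: L)
  case (Suc k)
  from Suc.prems have L: "L \<noteq> 0" by simp
  from Suc.prems have tl: "code_tl L = list_encode (map (code_nth (code_tl L)) [0..<k])"
    by (intro Suc.IH) simp
  have "code_nth (code_tl L) i = code_nth L (Suc i)" for i
    by (simp add: code_nth_def funpow_Suc_right del: funpow.simps)
  then have map: "map (code_nth L) [0..<Suc k] = code_hd L # map (code_nth (code_tl L)) [0..<k]"
    by (simp only: map_upt_Suc) (simp add: code_nth_def)
  have "L = code_Cons (code_hd L) (code_tl L)"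
    using code_Cons_hd_tl[OF L] by simp
  also have "\<dots> = list_encode (map (code_nth L) [0..<Suc k])"
    by (subst tl) (simp only: map list_encode_Cons)
  finally show ?case .
qed simp

declare code_length_is.simps [simp del]

lemma code_prepend_list_encode: "code_prepend xs (list_encode ys) = list_encode (xs @ ys)"
  by (induction xs) (simp_all add: code_prepend_def)

lemma computable_code_Cons:
  "computable k f \<Longrightarrow> computable k g \<Longrightarrow> computable k (\<lambda>xs. code_Cons (f xs) (g xs))"
  unfolding code_Cons_def by (intro computable_Suc computable_prod_encode)

lemma computable_list_encode_Cons:
  "computable k f \<Longrightarrow> computable k (\<lambda>xs. list_encode (g xs))
    \<Longrightarrow> computable k (\<lambda>xs. list_encode (f xs # g xs))"
  by (simp only: list_encode_Cons) (rule computable_code_Cons)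

lemma computable_code_hd: "computable k f \<Longrightarrow> computable k (\<lambda>xs. code_hd (f xs))"
  unfolding code_hd_def by (intro computable_prod_decode computable_diff computable_const)

lemma computable_code_tl: "computable k f \<Longrightarrow> computable k (\<lambda>xs. code_tl (f xs))"
  unfolding code_tl_def by (intro computable_prod_decode computable_diff computable_const)

lemma computable_code_nth: "computable k f \<Longrightarrow> computable k (\<lambda>xs. code_nth (f xs) i)"
  unfolding code_nth_def
  by (intro computable_code_hd computable_funpow[of code_tl] computable_const computable_code_tl
      computable_proj) simp_all

lemma computable_code_length_is:
  "computable k f \<Longrightarrow> computable_pred k (\<lambda>xs. code_length_is (f xs) n)"
proof (induction n arbitrary: f)
  case 0
  then show ?case by (simp add: code_length_is.simps computable_pred_eq computable_const)
next
  case (Suc n)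
  have "computable_pred k (\<lambda>xs. f xs \<noteq> 0)"
    by (intro computable_pred_not computable_pred_eq Suc.prems computable_const)
  moreover have "computable_pred k (\<lambda>xs. code_length_is (code_tl (f xs)) n)"
    by (rule Suc.IH[OF computable_code_tl[OF Suc.prems]])
  ultimately show ?case by (simp only: code_length_is.simps) (rule computable_pred_conj)
qed

lemma computable_code_prepend:
  "(\<And>i. i \<in> set is \<Longrightarrow> computable k (f i)) \<Longrightarrow> computable k g
    \<Longrightarrow> computable k (\<lambda>xs. code_prepend (map (\<lambda>i. f i xs) is) (g xs))"
  by (induction "is") (simp_all add: code_prepend_def computable_code_Cons)

lemma computable_list_encode_map:
  "(\<And>i. i \<in> set is \<Longrightarrow> computable k (f i)) \<Longrightarrow> computable k (\<lambda>xs. list_encode (map (\<lambda>i. f i xs) is))"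
  using computable_code_prepend[of "is" k f "\<lambda>xs. 0"] computable_const
  by (simp add: code_prepend_list_encode[of _ "[]", simplified])

text \<open>Partial functions on codes are represented by total ones that return \<open>0\<close> on failure
  and \<open>Suc v\<close> for the result \<open>v\<close>.\<close>

definition code_foldr :: "(nat \<Rightarrow> nat \<Rightarrow> nat) \<Rightarrow> nat \<Rightarrow> nat \<Rightarrow> nat" where
  "code_foldr g L acc = cov_rec (\<lambda>L F ys. if L = 0 then Suc (ys ! 0)
      else if F (code_tl L) = 0 then 0 else g (code_hd L) (F (code_tl L) - 1)) L [acc]"

lemma code_foldr_unfold:
  "code_foldr g L acc = (if L = 0 then Suc acc
     else if code_foldr g (code_tl L) acc = 0 then 0
     else g (code_hd L) (code_foldr g (code_tl L) acc - 1))"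
  unfolding code_foldr_def by (subst cov_rec_unfold) (simp add: code_tl_less)

lemma code_foldr_list_encode:
  "(\<And>x a. x \<in> set xs \<Longrightarrow> g x a \<noteq> 0)
    \<Longrightarrow> code_foldr g (list_encode xs) acc = Suc (foldr (\<lambda>x a. g x a - 1) xs acc)"
  by (induction xs) (simp_all add: code_foldr_unfold[of g "list_encode (_ # _)"] code_foldr_unfold[of g 0])

lemma code_foldr_neq_0:
  assumes "code_foldr g L acc \<noteq> 0" and "\<And>x a. g x a \<noteq> 0 \<Longrightarrow> P x"
  shows "\<exists>xs. L = list_encode xs \<and> (\<forall>x\<in>set xs. P x)"
  using assms(1)
proof (induction L rule: less_induct)
  case (less L)
  show ?case
  proof (cases "L = 0")
    case False
    with less.prems have "code_foldr g (code_tl L) acc \<noteq> 0"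
      and "P (code_hd L)"
      using assms(2) by (subst (asm) code_foldr_unfold; simp split: if_splits)+
    with less.IH[OF code_tl_less[OF False]] obtain xs
      where "code_tl L = list_encode xs" "\<forall>x\<in>set xs. P x" by blast
    with \<open>P (code_hd L)\<close> show ?thesis
      using code_Cons_hd_tl[OF False] by (intro exI[of _ "code_hd L # xs"]) auto
  qed (auto intro: exI[of _ "[]"])
qed

lemma computable_code_foldr:
  assumes g: "computable 2 (\<lambda>xs. g (xs ! 0) (xs ! 1))" and "computable k a" and "computable k b"
  shows "computable k (\<lambda>xs. code_foldr g (a xs) (b xs))"
proof (rule computable_binary[where h="code_foldr g", OF _ assms(2,3)])
  have "computable (Suc (Suc 1)) (\<lambda>xs. if xs ! 0 = 0 then Suc (drop 2 xs ! 0)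
      else if hist_lookup (xs ! 0) (xs ! 1) (code_tl (xs ! 0)) = 0 then 0
      else g (code_hd (xs ! 0)) (hist_lookup (xs ! 0) (xs ! 1) (code_tl (xs ! 0)) - 1))"
    by (intro computable_if computable_pred_eq computable_Suc computable_drop_nth computable_proj
        computable_const computable_hist_lookup computable_code_tl
        computable_binary[where h=g, OF g] computable_code_hd computable_diff) simp_all
  then have "computable (Suc 1) (\<lambda>xs. code_foldr g (hd xs) (tl xs ! 0))"
    unfolding code_foldr_def by (rule computable_cov_rec[THEN computable_cong]) (auto simp: length_Suc_conv)
  then have "computable 2 (\<lambda>xs. code_foldr g (hd xs) (tl xs ! 0))"
    by (simp add: numeral_2_eq_2)
  then show "computable 2 (\<lambda>xs. code_foldr g (xs ! 0) (xs ! 1))"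
    by (rule computable_cong) (auto simp: numeral_2_eq_2 length_Suc_conv)
qed

section \<open>Translating systems over \<open>R[\<alpha>]\<close> into systems over \<open>R\<close>\<close>

text \<open>Variables of the translated system over \<open>R\<close>: \<open>coord_var k i\<close> is the \<open>i\<close>-th coordinate of
  variable \<open>k\<close> of the system over \<open>R[\<alpha>]\<close>, \<open>pow_var m i\<close> the \<open>i\<close>-th coordinate of \<open>\<alpha>\<^sup>m\<close>, and
  \<open>coeff_sys_var i j\<close> the \<open>j\<close>-th variable of a system pinning down the \<open>i\<close>-th coefficient
  of the minimal polynomial.\<close>

definition coord_var :: "nat \<Rightarrow> nat \<Rightarrow> nat" where
  "coord_var k i = prod_encode (0, prod_encode (k, i))"

definition coeff_sys_var :: "nat \<Rightarrow> nat \<Rightarrow> nat" where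
  "coeff_sys_var i j = prod_encode (1, prod_encode (i, j))"

definition pow_var :: "nat \<Rightarrow> nat \<Rightarrow> nat" where
  "pow_var m i = prod_encode (2, prod_encode (m, i))"

primrec sum_tm :: "tm list \<Rightarrow> tm" where
  "sum_tm [] = TZero"
| "sum_tm (t # ts) = Add t (sum_tm ts)"

text \<open>Constant \<open>0\<close> is \<open>\<alpha>\<close>; its coordinates are those of \<open>\<alpha>\<^sup>1\<close>, which is not a basis vector
  when \<open>d = 1\<close>.\<close>

primrec tm_coords :: "nat \<Rightarrow> tm \<Rightarrow> tm list" where
  "tm_coords n (Var k) = map (\<lambda>i. Var (coord_var k i)) [0..<n]"
| "tm_coords n TZero = map (\<lambda>i. TZero) [0..<n]"
| "tm_coords n TOne = map (\<lambda>i. if i = 0 then TOne else TZero) [0..<n]"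
| "tm_coords n (Cst j) = (if j = 0 then map (\<lambda>i. Var (pow_var 1 i)) [0..<n]
                         else map (\<lambda>i. if i = 0 then Cst (j - 1) else TZero) [0..<n])"
| "tm_coords n (Add s t) = map (\<lambda>i. Add (tm_coords n s ! i) (tm_coords n t ! i)) [0..<n]"
| "tm_coords n (Mul s t) = map (\<lambda>i. sum_tm (map (\<lambda>j. sum_tm (map (\<lambda>l.
       Mul (Mul (tm_coords n s ! j) (tm_coords n t ! l)) (Var (pow_var (j + l) i))) [0..<n])) [0..<n]))
     [0..<n]"

lemma length_tm_coords [simp]: "length (tm_coords n t) = n"
  by (cases t) auto

definition coords_vanish :: "nat \<Rightarrow> tm list \<Rightarrow> bf list" where
  "coords_vanish n ts = concat (map (\<lambda>t. map (\<lambda>i. Eq (tm_coords n t ! i) TZero) [1..<n]) ts)"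

text \<open>An application of relation \<open>0\<close> (membership in \<open>R\<close>) to a wrong number of arguments
  is false, and so is its translation \<open>0 = 1\<close>.\<close>

fun transl_bf :: "nat \<Rightarrow> bf \<Rightarrow> bf list" where
  "transl_bf n (Eq s t) = map (\<lambda>i. Eq (tm_coords n s ! i) (tm_coords n t ! i)) [0..<n]"
| "transl_bf n (Rel r ts) =
    (if r = 0 then (if length ts = 1 then coords_vanish n ts else [Eq TZero TOne])
     else Rel (r - 1) (map (\<lambda>t. tm_coords n t ! 0) ts) # coords_vanish n ts)"

definition transl_sys :: "nat \<Rightarrow> bf list \<Rightarrow> bf list" where
  "transl_sys n fs = concat (map (transl_bf n) fs)"

primrec tm_rename :: "(nat \<Rightarrow> nat) \<Rightarrow> tm \<Rightarrow> tm" where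
  "tm_rename \<sigma> (Var k) = Var (\<sigma> k)"
| "tm_rename \<sigma> TZero = TZero"
| "tm_rename \<sigma> TOne = TOne"
| "tm_rename \<sigma> (Cst j) = Cst j"
| "tm_rename \<sigma> (Add s t) = Add (tm_rename \<sigma> s) (tm_rename \<sigma> t)"
| "tm_rename \<sigma> (Mul s t) = Mul (tm_rename \<sigma> s) (tm_rename \<sigma> t)"

fun bf_rename :: "(nat \<Rightarrow> nat) \<Rightarrow> bf \<Rightarrow> bf" where
  "bf_rename \<sigma> (Eq s t) = Eq (tm_rename \<sigma> s) (tm_rename \<sigma> t)"
| "bf_rename \<sigma> (Rel r ts) = Rel r (map (tm_rename \<sigma>) ts)"

lemma tm_eval_sum_tm: "tm_eval c v (sum_tm ts) = (\<Sum>t\<leftarrow>ts. tm_eval c v t)"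
  by (induction ts) auto

lemma tm_eval_rename: "tm_eval c v (tm_rename \<sigma> t) = tm_eval c (v \<circ> \<sigma>) t"
  by (induction t) auto

lemma bf_holds_rename: "bf_holds c r v (bf_rename \<sigma> f) \<longleftrightarrow> bf_holds c r (v \<circ> \<sigma>) f"
  by (cases f) (auto simp: tm_eval_rename comp_def)

lemma inj_enc_tm: "inj enc_tm"
proof (rule injI)
  show "enc_tm s = enc_tm t \<Longrightarrow> s = t" for s t
    by (induction s arbitrary: t) (case_tac t; simp)+
qed

lemma inj_enc_bf: "inj enc_bf"
proof (rule injI)
  show "enc_bf f = enc_bf g \<Longrightarrow> f = g" for f g
    by (cases f; cases g) (auto dest: injD[OF inj_enc_tm] simp: inj_map_eq_map[OF inj_enc_tm])
qed

lemma inj_enc_sys: "inj enc_sys"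
  using inj_enc_bf by (intro injI) (simp add: enc_sys_def list_encode_eq inj_map_eq_map)

text \<open>The tags \<open>0, \<dots>, 5\<close> below are those of \<open>enc_tm\<close> for \<open>Var\<close>, \<open>TZero\<close>, \<open>TOne\<close>, \<open>Cst\<close>,
  \<open>Add\<close>, \<open>Mul\<close>, and the tags \<open>0, 1\<close> those of \<open>enc_bf\<close> for \<open>Eq\<close>, \<open>Rel\<close>.\<close>

definition coords_code :: "nat \<Rightarrow> tm \<Rightarrow> nat" where
  "coords_code n t = list_encode (map enc_tm (tm_coords n t))"

primrec sum_tm_code :: "nat list \<Rightarrow> nat" where
  "sum_tm_code [] = enc_tm TZero"
| "sum_tm_code (c # cs) = list_encode [4, c, sum_tm_code cs]"

definition add_coords_code :: "nat \<Rightarrow> nat \<Rightarrow> nat \<Rightarrow> nat" where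
  "add_coords_code n A B = list_encode (map (\<lambda>i. list_encode [4, code_nth A i, code_nth B i]) [0..<n])"

definition mul_coords_code :: "nat \<Rightarrow> nat \<Rightarrow> nat \<Rightarrow> nat" where
  "mul_coords_code n A B = list_encode (map (\<lambda>i. sum_tm_code (map (\<lambda>j. sum_tm_code (map (\<lambda>l.
      list_encode [5, list_encode [5, code_nth A j, code_nth B l], enc_tm (Var (pow_var (j + l) i))])
     [0..<n])) [0..<n])) [0..<n])"

lemma enc_tm_sum_tm: "enc_tm (sum_tm ts) = sum_tm_code (map enc_tm ts)"
  by (induction ts) simp_all

lemma code_nth_coords_code: "i < n \<Longrightarrow> code_nth (coords_code n t) i = enc_tm (tm_coords n t ! i)"
  by (simp add: coords_code_def code_nth_list_encode)

lemma add_coords_code_coords_code: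
  "add_coords_code n (coords_code n s) (coords_code n t) = coords_code n (Add s t)"
  by (auto simp: add_coords_code_def coords_code_def[of n "Add s t"] code_nth_coords_code
      intro!: arg_cong[where f=list_encode] map_cong)

lemma mul_coords_code_coords_code:
  "mul_coords_code n (coords_code n s) (coords_code n t) = coords_code n (Mul s t)"
  by (auto simp: mul_coords_code_def coords_code_def[of n "Mul s t"] code_nth_coords_code
      enc_tm_sum_tm intro!: arg_cong[where f=list_encode] arg_cong[where f=sum_tm_code] map_cong)

lemma computable_sum_tm_code:
  "(\<And>i. i \<in> set is \<Longrightarrow> computable k (f i))
    \<Longrightarrow> computable k (\<lambda>xs. sum_tm_code (map (\<lambda>i. f i xs) is))"
  by (induction "is") (auto intro!: computable_list_encode_Cons computable_const)

lemma computable_add_coords_code: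
  "computable k a \<Longrightarrow> computable k b \<Longrightarrow> computable k (\<lambda>xs. add_coords_code n (a xs) (b xs))"
  unfolding add_coords_code_def
  by (intro computable_list_encode_map computable_list_encode_Cons computable_code_nth computable_const)

lemma computable_mul_coords_code:
  "computable k a \<Longrightarrow> computable k b \<Longrightarrow> computable k (\<lambda>xs. mul_coords_code n (a xs) (b xs))"
  unfolding mul_coords_code_def
  by (intro computable_list_encode_map computable_sum_tm_code computable_list_encode_Cons
      computable_code_nth computable_const)

lemma computable_coords_code_Var:
  "computable k a \<Longrightarrow> computable k (\<lambda>xs. coords_code n (Var (a xs)))"
  unfolding coords_code_def tm_coords.simps map_map comp_def enc_tm.simps coord_var_def
  by (intro computable_list_encode_map computable_list_encode_Cons computable_prod_encode
      computable_const)

lemma computable_coords_code_Cst: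
  assumes "computable k a"
  shows "computable k (\<lambda>xs. coords_code n (Cst (a xs)))"
proof -
  have "coords_code n (Cst j) = (if j = 0 then list_encode (map (\<lambda>i. list_encode [0, pow_var 1 i]) [0..<n])
      else list_encode (map (\<lambda>i. if i = 0 then list_encode [3, j - 1] else list_encode [1]) [0..<n]))"
    for j
    by (simp add: coords_code_def comp_def if_distrib[of enc_tm] cong: if_cong)
  then show ?thesis
    by (simp only:)
       (intro computable_if computable_pred_eq computable_list_encode_map computable_list_encode_Cons
        computable_diff computable_const assms)
qed

definition tm_coords_step :: "nat \<Rightarrow> nat \<Rightarrow> (nat \<Rightarrow> nat) \<Rightarrow> nat list \<Rightarrow> nat" where
  "tm_coords_step n m F ys =
    (if code_length_is m 3 \<and> F (code_nth m 1) \<noteq> 0 \<and> F (code_nth m 2) \<noteq> 0 then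
       (if code_nth m 0 = 4 then Suc (add_coords_code n (F (code_nth m 1) - 1) (F (code_nth m 2) - 1))
        else if code_nth m 0 = 5 then Suc (mul_coords_code n (F (code_nth m 1) - 1) (F (code_nth m 2) - 1))
        else 0)
     else if code_length_is m 2 \<and> code_nth m 0 = 0 then Suc (coords_code n (Var (code_nth m 1)))
     else if code_length_is m 1 \<and> code_nth m 0 = 1 then Suc (coords_code n TZero)
     else if code_length_is m 1 \<and> code_nth m 0 = 2 then Suc (coords_code n TOne)
     else if code_length_is m 2 \<and> code_nth m 0 = 3 then Suc (coords_code n (Cst (code_nth m 1)))
     else 0)"

definition tm_coords_code :: "nat \<Rightarrow> nat \<Rightarrow> nat" where
  "tm_coords_code n m = cov_rec (tm_coords_step n) m []"

lemma tm_coords_code_unfold: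
  "tm_coords_code n m = tm_coords_step n m (\<lambda>a. if a < m then tm_coords_code n a else 0) []"
  unfolding tm_coords_code_def by (rule cov_rec_unfold)

lemma tm_coords_code_enc: "tm_coords_code n (enc_tm t) = Suc (coords_code n t)"
proof (induction t)
  case (Add s t)
  then show ?case
    by (subst tm_coords_code_unfold)
       (simp add: tm_coords_step_def add_coords_code_coords_code[symmetric])
next
  case (Mul s t)
  then show ?case
    by (subst tm_coords_code_unfold)
       (simp add: tm_coords_step_def mul_coords_code_coords_code[symmetric])
qed (subst tm_coords_code_unfold; simp add: tm_coords_step_def)+

lemma tm_coords_code_neq_0: "tm_coords_code n m \<noteq> 0 \<Longrightarrow> m \<in> range enc_tm"
proof (induction m rule: less_induct)
  case (less m)
  let ?F = "\<lambda>a. if a < m then tm_coords_code n a else 0"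
  have step: "tm_coords_step n m ?F [] \<noteq> 0"
    using less.prems by (subst (asm) tm_coords_code_unfold)
  show ?case
  proof (cases "code_length_is m 3 \<and> ?F (code_nth m 1) \<noteq> 0 \<and> ?F (code_nth m 2) \<noteq> 0")
    case True
    then have "m = list_encode [code_nth m 0, code_nth m 1, code_nth m 2]"
      using code_length_isD[of m 3] by (simp add: upt_conv_Cons numeral_2_eq_2)
    then obtain c0 c1 c2 where m: "m = list_encode [c0, c1, c2]" by blast
    have "c1 \<in> range enc_tm" "c2 \<in> range enc_tm"
      using True less.IH[of c1] less.IH[of c2] by (simp_all add: m)
    then obtain s t where "c1 = enc_tm s" "c2 = enc_tm t" by blast
    moreover have "c0 = 4 \<or> c0 = 5"
      using step True by (auto simp: tm_coords_step_def m split: if_splits)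
    ultimately have "m = enc_tm (Add s t) \<or> m = enc_tm (Mul s t)"
      by (auto simp: m)
    then show ?thesis by blast
  next
    case False
    with step consider
        "code_length_is m 2" "code_nth m 0 = 0" | "code_length_is m 1" "code_nth m 0 = 1"
      | "code_length_is m 1" "code_nth m 0 = 2" | "code_length_is m 2" "code_nth m 0 = 3"
      by (auto simp: tm_coords_step_def split: if_splits)
    then show ?thesis
    proof cases
      case 1
      then have "m = enc_tm (Var (code_nth m 1))"
        using code_length_isD[of m 2] by (simp add: upt_conv_Cons)
      then show ?thesis by blast
    next
      case 2
      then have "m = enc_tm TZero"
        using code_length_isD[of m 1] by simp
      then show ?thesis by blast
    next
      case 3
      then have "m = enc_tm TOne"
        using code_length_isD[of m 1] by simp
      then show ?thesis by blast
    next
      case 4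
      then have "m = enc_tm (Cst (code_nth m 1))"
        using code_length_isD[of m 2] by (simp add: upt_conv_Cons)
      then show ?thesis by blast
    qed
  qed
qed

lemma computable_tm_coords_code: "computable k a \<Longrightarrow> computable k (\<lambda>xs. tm_coords_code n (a xs))"
proof (rule computable_unary[where h="tm_coords_code n"])
  have "computable (Suc (Suc 0))
          (\<lambda>xs. tm_coords_step n (xs ! 0) (hist_lookup (xs ! 0) (xs ! 1)) (drop 2 xs))"
    unfolding tm_coords_step_def
    by (intro computable_if computable_pred_conj computable_pred_not computable_pred_eq
        computable_code_length_is computable_hist_lookup computable_code_nth computable_Suc
        computable_add_coords_code computable_mul_coords_code computable_coords_code_Var
        computable_coords_code_Cst computable_diff computable_proj computable_const; simp)
  then have "computable (Suc 0) (\<lambda>xs. cov_rec (tm_coords_step n) (hd xs) (tl xs))"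
    by (rule computable_cov_rec)
  then have "computable 1 (\<lambda>xs. cov_rec (tm_coords_step n) (hd xs) (tl xs))"
    by simp
  then show "computable 1 (\<lambda>xs. tm_coords_code n (xs ! 0))"
    by (rule computable_cong) (auto simp: tm_coords_code_def length_Suc_conv)
qed

definition args_step :: "nat \<Rightarrow> nat \<Rightarrow> nat \<Rightarrow> nat" where
  "args_step n c X = (if tm_coords_code n c = 0 then 0 else Suc (prod_encode
     (code_Cons (code_nth (tm_coords_code n c - 1) 0) (fst (prod_decode X)),
      code_prepend (map (\<lambda>i. list_encode [0, code_nth (tm_coords_code n c - 1) i, enc_tm TZero]) [1..<n])
        (snd (prod_decode X)))))"

text \<open>On the code of an argument list \<open>ts\<close>, \<open>args_code\<close> computes the pair of the codes of the
  zeroth coordinates of \<open>ts\<close> and of \<open>coords_vanish n ts\<close> prepended to \<open>acc\<close>.\<close>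

definition args_code :: "nat \<Rightarrow> nat \<Rightarrow> nat \<Rightarrow> nat" where
  "args_code n L acc = code_foldr (args_step n) L (prod_encode (0, acc))"

lemma args_code_enc:
  assumes "0 < n"
  shows "args_code n (list_encode (map enc_tm ts)) (list_encode rest) =
    Suc (prod_encode (list_encode (map (\<lambda>t. enc_tm (tm_coords n t ! 0)) ts),
                      list_encode (map enc_bf (coords_vanish n ts) @ rest)))"
proof -
  have "foldr (\<lambda>x a. args_step n x a - 1) (map enc_tm ts) (prod_encode (0, list_encode rest)) =
    prod_encode (list_encode (map (\<lambda>t. enc_tm (tm_coords n t ! 0)) ts),
                 list_encode (map enc_bf (coords_vanish n ts) @ rest))"
  proof (induction ts)
    case (Cons t ts)
    have "map (\<lambda>i. list_encode [0, code_nth (coords_code n t) i, enc_tm TZero]) [1..<n] =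
          map (\<lambda>i. enc_bf (Eq (tm_coords n t ! i) TZero)) [1..<n]"
      by (auto simp: code_nth_coords_code)
    with Cons assms show ?case
      by (simp add: args_step_def tm_coords_code_enc code_nth_coords_code code_prepend_list_encode
          coords_vanish_def)
  qed (simp add: coords_vanish_def)
  then show ?thesis
    unfolding args_code_def
    by (subst code_foldr_list_encode) (auto simp: args_step_def tm_coords_code_enc)
qed

lemma args_code_neq_0: "args_code n L acc \<noteq> 0 \<Longrightarrow> \<exists>ts. L = list_encode (map enc_tm ts)"
proof -
  assume "args_code n L acc \<noteq> 0"
  then have "\<exists>cs. L = list_encode cs \<and> (\<forall>c\<in>set cs. c \<in> range enc_tm)"
    unfolding args_code_def
    by (rule code_foldr_neq_0) (auto simp: args_step_def intro: tm_coords_code_neq_0 split: if_splits)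
  then show ?thesis by (force simp: ex_map_conv)
qed

lemma computable_args_code:
  "computable k a \<Longrightarrow> computable k b \<Longrightarrow> computable k (\<lambda>xs. args_code n (a xs) (b xs))"
  unfolding args_code_def
  by (intro computable_code_foldr computable_prod_encode computable_const)
     (unfold args_step_def,
      intro computable_if computable_pred_eq computable_tm_coords_code computable_Suc
        computable_prod_encode computable_code_Cons computable_code_nth computable_diff
        computable_prod_decode computable_code_prepend computable_list_encode_Cons
        computable_proj computable_const; simp)

definition eq_coords_code :: "nat \<Rightarrow> nat \<Rightarrow> nat \<Rightarrow> nat \<Rightarrow> nat" where
  "eq_coords_code n A B acc =
     code_prepend (map (\<lambda>i. list_encode [0, code_nth A i, code_nth B i]) [0..<n]) acc"

definition rel_code :: "nat \<Rightarrow> nat \<Rightarrow> nat \<Rightarrow> nat \<Rightarrow> nat" where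
  "rel_code r L X acc =
    (if r = 0 then
       (if code_length_is L 1 then snd (prod_decode X) else code_Cons (enc_bf (Eq TZero TOne)) acc)
     else code_Cons (code_Cons 1 (code_Cons (r - 1) (fst (prod_decode X)))) (snd (prod_decode X)))"

definition transl_bf_code :: "nat \<Rightarrow> nat \<Rightarrow> nat \<Rightarrow> nat" where
  "transl_bf_code n c acc =
    (if code_length_is c 3 \<and> code_nth c 0 = 0
        \<and> tm_coords_code n (code_nth c 1) \<noteq> 0 \<and> tm_coords_code n (code_nth c 2) \<noteq> 0
     then Suc (eq_coords_code n (tm_coords_code n (code_nth c 1) - 1)
                                (tm_coords_code n (code_nth c 2) - 1) acc)
     else if c \<noteq> 0 \<and> code_hd c = 1 \<and> code_tl c \<noteq> 0 \<and> args_code n (code_tl (code_tl c)) acc \<noteq> 0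
     then Suc (rel_code (code_hd (code_tl c)) (code_tl (code_tl c))
                (args_code n (code_tl (code_tl c)) acc - 1) acc)
     else 0)"

lemma transl_bf_code_enc:
  assumes "0 < n"
  shows "transl_bf_code n (enc_bf f) (list_encode rest) = Suc (list_encode (map enc_bf (transl_bf n f) @ rest))"
proof (cases f)
  case (Eq s t)
  have "eq_coords_code n (coords_code n s) (coords_code n t) (list_encode rest) =
        list_encode (map enc_bf (transl_bf n f) @ rest)"
    by (auto simp: Eq eq_coords_code_def code_prepend_list_encode code_nth_coords_code)
  then show ?thesis by (simp add: Eq transl_bf_code_def tm_coords_code_enc)
next
  case (Rel r ts)
  have "length ts = 1 \<longleftrightarrow> (\<exists>t. ts = [t])" by (auto simp: length_Suc_conv)
  with assms show ?thesis
    by (auto simp: Rel transl_bf_code_def args_code_enc rel_code_def)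
qed

lemma transl_bf_code_neq_0: "transl_bf_code n c acc \<noteq> 0 \<Longrightarrow> c \<in> range enc_bf"
proof -
  assume nz: "transl_bf_code n c acc \<noteq> 0"
  show ?thesis
  proof (cases "code_length_is c 3 \<and> code_nth c 0 = 0
      \<and> tm_coords_code n (code_nth c 1) \<noteq> 0 \<and> tm_coords_code n (code_nth c 2) \<noteq> 0")
    case True
    then obtain s t where "code_nth c 1 = enc_tm s" "code_nth c 2 = enc_tm t"
      using tm_coords_code_neq_0 by blast
    with True have "c = enc_bf (Eq s t)"
      using code_length_isD[of c 3] by (simp add: upt_conv_Cons numeral_2_eq_2)
    then show ?thesis by blast
  next
    case False
    with nz have "c \<noteq> 0" "code_hd c = 1" "code_tl c \<noteq> 0" "args_code n (code_tl (code_tl c)) acc \<noteq> 0"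
      by (auto simp: transl_bf_code_def split: if_splits)
    then obtain ts where ts: "code_tl (code_tl c) = list_encode (map enc_tm ts)"
      using args_code_neq_0 by blast
    have "c = code_Cons (code_hd c) (code_Cons (code_hd (code_tl c)) (code_tl (code_tl c)))"
      using \<open>c \<noteq> 0\<close> \<open>code_tl c \<noteq> 0\<close> by (simp add: code_Cons_hd_tl)
    also have "\<dots> = enc_bf (Rel (code_hd (code_tl c)) ts)"
      using \<open>code_hd c = 1\<close> ts by simp
    finally show ?thesis by blast
  qed
qed

lemma computable_transl_bf_code:
  "computable k a \<Longrightarrow> computable k b \<Longrightarrow> computable k (\<lambda>xs. transl_bf_code n (a xs) (b xs))"
  unfolding transl_bf_code_def eq_coords_code_def rel_code_def
  by (intro computable_if computable_pred_conj computable_pred_not computable_pred_eq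
      computable_code_length_is computable_code_nth computable_tm_coords_code computable_Suc
      computable_code_prepend computable_list_encode_Cons computable_diff computable_code_hd
      computable_code_tl computable_args_code computable_code_Cons computable_prod_decode
      computable_const; simp)

definition transl_sys_code :: "nat \<Rightarrow> nat \<Rightarrow> nat \<Rightarrow> nat" where
  "transl_sys_code n P m = code_foldr (transl_bf_code n) m P"

lemma transl_sys_code_enc:
  assumes "0 < n"
  shows "transl_sys_code n (enc_sys pre) (enc_sys fs) = Suc (enc_sys (transl_sys n fs @ pre))"
proof -
  have nz: "transl_bf_code n (enc_bf f) acc \<noteq> 0" for f acc
    using transl_bf_code_enc[OF assms, of f "list_decode acc"] by simp
  have "foldr (\<lambda>c acc. transl_bf_code n c acc - 1) (map enc_bf fs) (enc_sys pre) =
        enc_sys (transl_sys n fs @ pre)"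
    by (induction fs) (simp_all add: enc_sys_def transl_sys_def transl_bf_code_enc[OF assms])
  moreover have "code_foldr (transl_bf_code n) (list_encode (map enc_bf fs)) (enc_sys pre) =
      Suc (foldr (\<lambda>c acc. transl_bf_code n c acc - 1) (map enc_bf fs) (enc_sys pre))"
    by (rule code_foldr_list_encode) (auto simp: nz[unfolded neq0_conv])
  ultimately show ?thesis
    unfolding transl_sys_code_def enc_sys_def[of fs] by simp
qed

lemma transl_sys_code_neq_0: "transl_sys_code n P m \<noteq> 0 \<Longrightarrow> m \<in> range enc_sys"
proof -
  assume "transl_sys_code n P m \<noteq> 0"
  then have "\<exists>cs. m = list_encode cs \<and> (\<forall>c\<in>set cs. c \<in> range enc_bf)"
    unfolding transl_sys_code_def by (rule code_foldr_neq_0) (rule transl_bf_code_neq_0)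
  then obtain cs where "m = list_encode cs" "\<forall>c\<in>set cs. c \<in> range enc_bf" by blast
  moreover from this(2) have "\<exists>fs. cs = map enc_bf fs"
    unfolding ex_map_conv by blast
  ultimately show ?thesis by (auto simp: enc_sys_def)
qed

lemma computable_transl_sys_code: "computable 1 (\<lambda>xs. transl_sys_code n P (xs ! 0))"
  unfolding transl_sys_code_def
  by (intro computable_code_foldr computable_transl_bf_code computable_proj computable_const) simp_all

lemma decidable_solvable_transfer:
  fixes T :: "bf list \<Rightarrow> bf list"
  assumes dec: "decidable_nat_set {enc_sys fs | fs. Sol' fs}"
    and unsat: "\<not> Sol' [Eq TZero TOne]"
    and equiv: "\<And>fs. Sol fs \<longleftrightarrow> Sol' (T fs)"
    and G: "computable 1 (\<lambda>xs. G (xs ! 0))"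
    and G_enc: "\<And>fs. G (enc_sys fs) = Suc (enc_sys (T fs))"
    and G_neq_0: "\<And>m. G m \<noteq> 0 \<Longrightarrow> m \<in> range enc_sys"
  shows "decidable_nat_set {enc_sys fs | fs. Sol fs}"
proof -
  define g where "g m = (if G m = 0 then enc_sys [Eq TZero TOne] else G m - 1)" for m
  have g: "computable 1 (\<lambda>xs. g (xs ! 0))"
    unfolding g_def by (intro computable_if computable_pred_eq computable_diff G computable_const)
  have vimage: "{enc_sys fs | fs. Sol fs} = g -` {enc_sys fs | fs. Sol' fs}"
  proof (intro set_eqI)
    fix m
    show "m \<in> {enc_sys fs | fs. Sol fs} \<longleftrightarrow> m \<in> g -` {enc_sys fs | fs. Sol' fs}"
    proof (cases "G m = 0")
      case True
      then have "m \<notin> range enc_sys" using G_enc by auto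
      moreover have "g m = enc_sys [Eq TZero TOne]" by (simp add: g_def True)
      ultimately show ?thesis using unsat by (auto simp: inj_eq[OF inj_enc_sys])
    next
      case False
      then obtain fs where m: "m = enc_sys fs" using G_neq_0 by blast
      then have "g m = enc_sys (T fs)" by (simp add: g_def G_enc)
      with m show ?thesis using equiv by (auto simp: inj_eq[OF inj_enc_sys])
    qed
  qed
  show ?thesis
    unfolding vimage by (rule decidable_nat_set_vimage[OF dec g])
qed

section \<open>Coordinates in \<open>R[\<alpha>]\<close>\<close>

locale power_basis =
  fixes R :: "'a::field set" and \<alpha> :: 'a and p :: "'a poly"
  assumes zero_mem: "0 \<in> R" and one_mem: "1 \<in> R"
    and add_mem: "\<And>x y. x \<in> R \<Longrightarrow> y \<in> R \<Longrightarrow> x + y \<in> R"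
    and mult_mem: "\<And>x y. x \<in> R \<Longrightarrow> y \<in> R \<Longrightarrow> x * y \<in> R"
    and uminus_mem: "\<And>x. x \<in> R \<Longrightarrow> - x \<in> R"
    and monic: "lead_coeff p = 1"
    and root: "poly p \<alpha> = 0"
    and minimal: "\<And>q. q \<noteq> 0 \<Longrightarrow> (\<forall>i. coeff q i \<in> frac_field R) \<Longrightarrow> poly q \<alpha> = 0
                    \<Longrightarrow> degree p \<le> degree q"
    and coeff_mem: "\<And>i. coeff p i \<in> R"
begin

abbreviation d where "d \<equiv> degree p"

lemma diff_mem: "x \<in> R \<Longrightarrow> y \<in> R \<Longrightarrow> x - y \<in> R"
  using add_mem[OF _ uminus_mem, of x y] by simp

lemma sum_mem: "(\<And>x. x \<in> S \<Longrightarrow> f x \<in> R) \<Longrightarrow> sum f S \<in> R"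
  by (induction S rule: infinite_finite_induct) (simp_all add: zero_mem add_mem)

lemma mem_frac_field: "x \<in> R \<Longrightarrow> x \<in> frac_field R"
  unfolding frac_field_def using one_mem by force

lemma degree_pos: "0 < d"
proof (rule ccontr)
  assume "\<not> 0 < d"
  then have "poly p \<alpha> = lead_coeff p" by (simp add: poly_altdef)
  then show False using monic root by simp
qed

lemma power_degree: "\<alpha> ^ d = - (\<Sum>i<d. coeff p i * \<alpha> ^ i)"
proof -
  have "0 = (\<Sum>i\<le>d. coeff p i * \<alpha> ^ i)" using root by (simp add: poly_altdef)
  also have "\<dots> = (\<Sum>i<d. coeff p i * \<alpha> ^ i) + \<alpha> ^ d"
    using monic by (simp add: lessThan_Suc_atMost[symmetric])
  finally show ?thesis by (simp add: eq_neg_iff_add_eq_0 add.commute)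
qed

text \<open>\<open>pow_coeff m i\<close> is the \<open>i\<close>-th coordinate of \<open>\<alpha>\<^sup>m\<close> in the basis \<open>1, \<alpha>, \<dots>, \<alpha>\<^bsup>d-1\<^esup>\<close>:
  multiplying by \<open>\<alpha>\<close> shifts the coordinates and reduces \<open>\<alpha>\<^sup>d\<close> by \<open>power_degree\<close>.\<close>

fun pow_coeff :: "nat \<Rightarrow> nat \<Rightarrow> 'a" where
  "pow_coeff 0 i = (if i = 0 then 1 else 0)"
| "pow_coeff (Suc m) i = (if i = 0 then 0 else pow_coeff m (i - 1)) - coeff p i * pow_coeff m (d - 1)"

lemma pow_coeff_mem: "pow_coeff m i \<in> R"
  by (induction m arbitrary: i) (auto intro!: diff_mem mult_mem uminus_mem coeff_mem zero_mem one_mem)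

definition from_coords :: "(nat \<Rightarrow> 'a) \<Rightarrow> 'a" where
  "from_coords r = (\<Sum>i<d. r i * \<alpha> ^ i)"

lemma from_coords_cong: "(\<And>i. i < d \<Longrightarrow> r i = s i) \<Longrightarrow> from_coords r = from_coords s"
  unfolding from_coords_def by (rule sum.cong) auto

lemma from_coords_const: "from_coords (\<lambda>i. if i = 0 then x else 0) = x"
  using degree_pos by (simp add: from_coords_def if_distrib[of "\<lambda>y. y * _"] sum.If_cases)

lemma from_coords_add: "from_coords (\<lambda>i. r i + s i) = from_coords r + from_coords s"
  unfolding from_coords_def by (simp add: sum.distrib distrib_right)

lemma power_eq_from_coords: "\<alpha> ^ m = from_coords (pow_coeff m)"
proof (induction m)
  case 0
  show ?case using from_coords_const[of 1] by (simp add: if_distrib cong: if_cong)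
next
  case (Suc m)
  obtain d' where d: "d = Suc d'" using degree_pos not0_implies_Suc by blast
  have shift: "(\<Sum>i<d. (if i = 0 then 0 else pow_coeff m (i - 1)) * \<alpha> ^ i)
               = (\<Sum>i<d'. pow_coeff m i * \<alpha> ^ Suc i)"
    using d by (simp add: sum.lessThan_Suc_shift del: sum.lessThan_Suc)
  have "\<alpha> ^ Suc m = (\<Sum>i<d. pow_coeff m i * \<alpha> ^ Suc i)"
    using Suc by (simp add: from_coords_def sum_distrib_left mult_ac)
  also have "\<dots> = (\<Sum>i<d'. pow_coeff m i * \<alpha> ^ Suc i) + pow_coeff m d' * \<alpha> ^ d"
    using d by simp
  also have "\<dots> = (\<Sum>i<d'. pow_coeff m i * \<alpha> ^ Suc i)
                  - pow_coeff m d' * (\<Sum>i<d. coeff p i * \<alpha> ^ i)"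
    by (simp add: power_degree)
  also have "\<dots> = from_coords (pow_coeff (Suc m))"
    unfolding from_coords_def pow_coeff.simps left_diff_distrib sum_subtractf shift
    by (simp add: sum_distrib_left d mult_ac ring_distribs)
  finally show ?case .
qed

lemma from_coords_mult:
  "from_coords a * from_coords b = from_coords (\<lambda>i. \<Sum>j<d. \<Sum>l<d. a j * b l * pow_coeff (j + l) i)"
proof -
  have "from_coords (\<lambda>i. \<Sum>j<d. \<Sum>l<d. a j * b l * pow_coeff (j + l) i)
      = (\<Sum>i<d. \<Sum>j<d. \<Sum>l<d. a j * b l * (pow_coeff (j + l) i * \<alpha> ^ i))"
    unfolding from_coords_def by (simp add: sum_distrib_left sum_distrib_right mult_ac)
  also have "\<dots> = (\<Sum>j<d. \<Sum>i<d. \<Sum>l<d. a j * b l * (pow_coeff (j + l) i * \<alpha> ^ i))"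
    by (rule sum.swap)
  also have "\<dots> = (\<Sum>j<d. \<Sum>l<d. \<Sum>i<d. a j * b l * (pow_coeff (j + l) i * \<alpha> ^ i))"
    by (intro sum.cong refl sum.swap)
  also have "\<dots> = (\<Sum>j<d. \<Sum>l<d. a j * b l * from_coords (pow_coeff (j + l)))"
    by (simp add: from_coords_def sum_distrib_left)
  also have "\<dots> = (\<Sum>j<d. \<Sum>l<d. a j * b l * \<alpha> ^ (j + l))"
    by (simp only: power_eq_from_coords)
  also have "\<dots> = from_coords a * from_coords b"
    unfolding from_coords_def by (simp add: sum_product power_add mult_ac)
  finally show ?thesis by (rule sym)
qed

lemma from_coords_mem_adjoin: "(\<And>i. i < d \<Longrightarrow> r i \<in> R) \<Longrightarrow> from_coords r \<in> adjoin R \<alpha>"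
proof -
  assume r: "\<And>i. i < d \<Longrightarrow> r i \<in> R"
  define q where "q = (\<Sum>i<d. monom (r i) i)"
  have "coeff q j = (if j < d then r j else 0)" for j
    unfolding q_def by (simp add: coeff_sum coeff_monom)
  then have "\<forall>j. coeff q j \<in> R" using r zero_mem by simp
  moreover have "poly q \<alpha> = from_coords r"
    unfolding q_def from_coords_def by (simp add: poly_sum poly_monom)
  ultimately show ?thesis unfolding adjoin_def by force
qed

text \<open>Uniqueness of coordinates is where the minimality of \<open>p\<close> over the fraction field is used.\<close>

lemma from_coords_inj:
  assumes "\<And>i. i < d \<Longrightarrow> r i \<in> R" and "\<And>i. i < d \<Longrightarrow> s i \<in> R"
    and "from_coords r = from_coords s" and "i < d"
  shows "r i = s i"
proof -
  define q where "q = (\<Sum>i<d. monom (r i - s i) i)"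
  have coeff_q: "coeff q j = (if j < d then r j - s j else 0)" for j
    unfolding q_def by (simp add: coeff_sum coeff_monom)
  have "poly q \<alpha> = from_coords r - from_coords s"
    unfolding q_def from_coords_def by (simp add: poly_sum poly_monom left_diff_distrib sum_subtractf)
  then have "poly q \<alpha> = 0" using assms(3) by simp
  moreover have "\<forall>j. coeff q j \<in> frac_field R"
    using coeff_q assms(1,2) zero_mem by (auto intro!: mem_frac_field diff_mem)
  moreover have "degree q < d"
    using degree_pos by (intro degree_lessI) (auto simp: coeff_q)
  ultimately have "q = 0" using minimal by (meson not_less)
  then show ?thesis using coeff_q[of i] \<open>i < d\<close> by simp
qed

lemma adjoin_eq_from_coords:
  assumes "x \<in> adjoin R \<alpha>"
  obtains r where "\<And>i. r i \<in> R" and "x = from_coords r"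
proof -
  obtain q where q: "x = poly q \<alpha>" "\<And>i. coeff q i \<in> R"
    using assms unfolding adjoin_def by blast
  define r where "r i = (\<Sum>m\<le>degree q. coeff q m * pow_coeff m i)" for i
  have "x = (\<Sum>m\<le>degree q. coeff q m * \<alpha> ^ m)" using q(1) by (simp add: poly_altdef)
  also have "\<dots> = (\<Sum>m\<le>degree q. coeff q m * from_coords (pow_coeff m))"
    by (simp only: power_eq_from_coords)
  also have "\<dots> = (\<Sum>m\<le>degree q. \<Sum>i<d. coeff q m * pow_coeff m i * \<alpha> ^ i)"
    by (simp add: from_coords_def sum_distrib_left mult_ac)
  also have "\<dots> = from_coords r"
    unfolding from_coords_def r_def by (subst sum.swap) (simp add: sum_distrib_right)
  moreover have "r i \<in> R" for i
    unfolding r_def using q(2) by (intro sum_mem mult_mem pow_coeff_mem)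
  ultimately show ?thesis using that by blast
qed

lemma from_coords_mem_iff:
  assumes "\<And>i. i < d \<Longrightarrow> r i \<in> R"
  shows "from_coords r \<in> R \<longleftrightarrow> (\<forall>i. 0 < i \<and> i < d \<longrightarrow> r i = 0)"
proof
  assume "from_coords r \<in> R"
  then show "\<forall>i. 0 < i \<and> i < d \<longrightarrow> r i = 0"
    using from_coords_inj[OF assms, where s="\<lambda>i. if i = 0 then from_coords r else 0"]
      from_coords_const zero_mem by force
next
  assume "\<forall>i. 0 < i \<and> i < d \<longrightarrow> r i = 0"
  then have "from_coords r = from_coords (\<lambda>i. if i = 0 then r 0 else 0)"
    by (intro from_coords_cong) auto
  then show "from_coords r \<in> R" using from_coords_const assms degree_pos by simp
qed

end

section \<open>Correctness of the translation\<close>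

locale adjoin_translation = power_basis R \<alpha> p
  for R :: "'a::field set" and \<alpha> p +
  fixes cst :: "nat \<Rightarrow> 'a" and rel :: "nat \<Rightarrow> 'a list set"
  assumes cst_mem: "\<And>i. cst i \<in> R"
    and rel_subset: "\<And>i. rel i \<subseteq> lists R"
    and coeff_Sc': "\<And>i. coeff p i \<in> Sc' R cst rel"
begin

definition lift_val :: "(nat \<Rightarrow> 'a) \<Rightarrow> nat \<Rightarrow> 'a" where
  "lift_val w k = from_coords (\<lambda>i. w (coord_var k i))"

definition powers_correct :: "(nat \<Rightarrow> 'a) \<Rightarrow> bool" where
  "powers_correct w \<longleftrightarrow> (\<forall>m \<le> 2 * d. \<forall>i<d. w (pow_var m i) = pow_coeff m i)"

lemma tm_eval_mem: "(\<And>v. w v \<in> R) \<Longrightarrow> tm_eval cst w t \<in> R"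
  by (induction t) (auto intro: zero_mem one_mem cst_mem add_mem mult_mem)

lemma tm_coords_sem:
  assumes w: "powers_correct w"
  shows "from_coords (\<lambda>i. tm_eval cst w (tm_coords d t ! i)) = tm_eval (cst_alpha \<alpha> cst) (lift_val w) t"
proof (induction t)
  case (Var k)
  show ?case by (simp add: lift_val_def cong: from_coords_cong)
next
  case TZero
  show ?case using from_coords_const[of 0] by (simp cong: from_coords_cong)
next
  case TOne
  have "from_coords (\<lambda>i. tm_eval cst w (tm_coords d TOne ! i)) = from_coords (\<lambda>i. if i = 0 then 1 else 0)"
    by (rule from_coords_cong) simp
  then show ?case using from_coords_const[of 1] by simp
next
  case (Cst j)
  show ?case
  proof (cases j)
    case 0
    have "from_coords (\<lambda>i. tm_eval cst w (tm_coords d (Cst j) ! i)) = from_coords (pow_coeff 1)"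
      using w degree_pos 0 by (intro from_coords_cong) (auto simp: powers_correct_def)
    then show ?thesis using power_eq_from_coords[of 1] 0 by (simp add: cst_alpha_def)
  next
    case (Suc j')
    have "from_coords (\<lambda>i. tm_eval cst w (tm_coords d (Cst j) ! i))
        = from_coords (\<lambda>i. if i = 0 then cst j' else 0)"
      using Suc by (intro from_coords_cong) simp
    then show ?thesis using from_coords_const[of "cst j'"] Suc by (simp add: cst_alpha_def)
  qed
next
  case (Add s t)
  then show ?case by (simp add: from_coords_add cong: from_coords_cong)
next
  case (Mul s t)
  let ?a = "\<lambda>j. tm_eval cst w (tm_coords d s ! j)" and ?b = "\<lambda>j. tm_eval cst w (tm_coords d t ! j)"
  have "tm_eval cst w (tm_coords d (Mul s t) ! i) = (\<Sum>j<d. \<Sum>l<d. ?a j * ?b l * pow_coeff (j + l) i)"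
    if "i < d" for i
    using w that by (auto simp: tm_eval_sum_tm sum_list_sum_nth powers_correct_def atLeast0LessThan
        intro!: sum.cong)
  then have "from_coords (\<lambda>i. tm_eval cst w (tm_coords d (Mul s t) ! i)) = from_coords ?a * from_coords ?b"
    by (simp add: from_coords_mult cong: from_coords_cong)
  with Mul show ?case by simp
qed

lemma transl_bf_sem:
  assumes w: "powers_correct w" and wR: "\<And>v. w v \<in> R"
  shows "bf_holds (cst_alpha \<alpha> cst) (rel_alpha R rel) (lift_val w) f
         \<longleftrightarrow> (\<forall>h\<in>set (transl_bf d f). bf_holds cst rel w h)"
proof -
  define co where "co t i = tm_eval cst w (tm_coords d t ! i)" for t i
  have co_mem: "co t i \<in> R" for t i
    unfolding co_def by (rule tm_eval_mem[OF wR])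
  have val: "tm_eval (cst_alpha \<alpha> cst) (lift_val w) t = from_coords (co t)" for t
    using tm_coords_sem[OF w, of t] by (simp add: co_def[abs_def])
  have in_R: "from_coords (co t) \<in> R \<longleftrightarrow> (\<forall>i. 0 < i \<and> i < d \<longrightarrow> co t i = 0)" for t
    using from_coords_mem_iff co_mem by blast
  have in_R_eq: "from_coords (co t) = co t 0" if "\<forall>i. 0 < i \<and> i < d \<longrightarrow> co t i = 0" for t
  proof -
    have "from_coords (co t) = from_coords (\<lambda>i. if i = 0 then co t 0 else 0)"
      using that by (intro from_coords_cong) auto
    then show ?thesis using from_coords_const by simp
  qed
  have vanish: "(\<forall>h\<in>set (coords_vanish d ts). bf_holds cst rel w h)
      \<longleftrightarrow> (\<forall>t\<in>set ts. \<forall>i. 0 < i \<and> i < d \<longrightarrow> co t i = 0)" for ts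
    by (auto simp: coords_vanish_def co_def)
  show ?thesis
  proof (cases f)
    case (Eq s t)
    have "from_coords (co s) = from_coords (co t) \<longleftrightarrow> (\<forall>i<d. co s i = co t i)"
      using from_coords_inj[of "co s" "co t"] co_mem from_coords_cong[of "co s" "co t"] by blast
    then show ?thesis using Eq by (auto simp: val co_def)
  next
    case (Rel r ts)
    show ?thesis
    proof (cases r)
      case 0
      show ?thesis
      proof (cases "length ts = 1")
        case True
        then obtain t where "ts = [t]" by (auto simp: length_Suc_conv)
        then show ?thesis using Rel 0 vanish[of ts] in_R[of t] by (simp add: rel_alpha_def val)
      qed (use Rel 0 in \<open>auto simp: rel_alpha_def\<close>)
    next
      case (Suc j)
      have "map (\<lambda>t. from_coords (co t)) ts \<in> rel j \<longleftrightarrow>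
            map (\<lambda>t. co t 0) ts \<in> rel j \<and> (\<forall>t\<in>set ts. \<forall>i. 0 < i \<and> i < d \<longrightarrow> co t i = 0)"
      proof
        assume rel: "map (\<lambda>t. from_coords (co t)) ts \<in> rel j"
        then have vanishes: "\<forall>t\<in>set ts. \<forall>i. 0 < i \<and> i < d \<longrightarrow> co t i = 0"
          using rel_subset[of j] in_R by auto
        then have "map (\<lambda>t. from_coords (co t)) ts = map (\<lambda>t. co t 0) ts"
          using in_R_eq by (intro map_cong) auto
        with rel vanishes
        show "map (\<lambda>t. co t 0) ts \<in> rel j \<and> (\<forall>t\<in>set ts. \<forall>i. 0 < i \<and> i < d \<longrightarrow> co t i = 0)"
          by simp
      next
        assume "map (\<lambda>t. co t 0) ts \<in> rel j \<and> (\<forall>t\<in>set ts. \<forall>i. 0 < i \<and> i < d \<longrightarrow> co t i = 0)"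
        moreover have eq: "map (\<lambda>t. from_coords (co t)) ts = map (\<lambda>t. co t 0) ts"
          using calculation in_R_eq by (intro map_cong) auto
        ultimately show "map (\<lambda>t. from_coords (co t)) ts \<in> rel j"
          unfolding eq by blast
      qed
      moreover have "map (tm_eval (cst_alpha \<alpha> cst) (lift_val w)) ts = map (\<lambda>t. from_coords (co t)) ts"
        by (simp add: val)
      moreover have "map (tm_eval cst w) (map (\<lambda>t. tm_coords d t ! 0) ts) = map (\<lambda>t. co t 0) ts"
        by (simp add: co_def)
      ultimately show ?thesis
        using Rel Suc vanish[of ts] by (simp add: rel_alpha_def del: map_map map_eq_conv)
    qed
  qed
qed

definition coeff_sys :: "nat \<Rightarrow> bf list" where
  "coeff_sys i = (SOME fs. \<forall>y\<in>R. y = coeff p i \<longleftrightarrow>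
      (\<exists>v. (\<forall>n. v n \<in> R) \<and> v 0 = y \<and> (\<forall>f\<in>set fs. bf_holds cst rel v f)))"

lemma coeff_sys_defines:
  "y \<in> R \<Longrightarrow> y = coeff p i \<longleftrightarrow>
     (\<exists>v. (\<forall>n. v n \<in> R) \<and> v 0 = y \<and> (\<forall>f\<in>set (coeff_sys i). bf_holds cst rel v f))"
proof -
  have "\<exists>fs. \<forall>y\<in>R. y = coeff p i \<longleftrightarrow>
      (\<exists>v. (\<forall>n. v n \<in> R) \<and> v 0 = y \<and> (\<forall>f\<in>set fs. bf_holds cst rel v f))"
    using coeff_Sc'[of i] unfolding Sc'_def by blast
  then show "y \<in> R \<Longrightarrow> ?thesis" unfolding coeff_sys_def by (rule someI2_ex) blast
qed

text \<open>The recursion of \<open>pow_coeff\<close>, with \<open>coeff p i\<close> read off variable \<open>0\<close> of a copy of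
  \<open>coeff_sys i\<close>.\<close>

definition pow_eqs :: "bf list" where
  "pow_eqs = map (\<lambda>i. Eq (Var (pow_var 0 i)) (if i = 0 then TOne else TZero)) [0..<d] @
     concat (map (\<lambda>m. map (\<lambda>i.
       Eq (Add (Var (pow_var (Suc m) i)) (Mul (Var (coeff_sys_var i 0)) (Var (pow_var m (d - 1)))))
          (if i = 0 then TZero else Var (pow_var m (i - 1)))) [0..<d]) [0..<2 * d])"

definition aux_sys :: "bf list" where
  "aux_sys = concat (map (\<lambda>i. map (bf_rename (coeff_sys_var i)) (coeff_sys i)) [0..<d]) @ pow_eqs"

lemma aux_sys_powers_correct:
  assumes wR: "\<And>v. w v \<in> R" and sat: "\<forall>h\<in>set aux_sys. bf_holds cst rel w h"
  shows "powers_correct w"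
proof -
  have coeff: "w (coeff_sys_var i 0) = coeff p i" if "i < d" for i
  proof -
    have "bf_holds cst rel w (bf_rename (coeff_sys_var i) f)" if "f \<in> set (coeff_sys i)" for f
      using sat that \<open>i < d\<close> by (force simp: aux_sys_def)
    then have "\<forall>f\<in>set (coeff_sys i). bf_holds cst rel (w \<circ> coeff_sys_var i) f"
      by (simp add: bf_holds_rename)
    then have "\<exists>v. (\<forall>n. v n \<in> R) \<and> v 0 = w (coeff_sys_var i 0)
                  \<and> (\<forall>f\<in>set (coeff_sys i). bf_holds cst rel v f)"
      using wR by (intro exI[of _ "w \<circ> coeff_sys_var i"]) simp
    then show ?thesis using coeff_sys_defines[OF wR] by blast
  qed
  have eqs: "\<forall>h\<in>set pow_eqs. bf_holds cst rel w h"
    using sat by (simp add: aux_sys_def)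
  have "\<forall>i<d. w (pow_var m i) = pow_coeff m i" if "m \<le> 2 * d" for m
    using that
  proof (induction m)
    case 0
    show ?case
    proof (intro allI impI)
      fix i assume "i < d"
      then have "Eq (Var (pow_var 0 i)) (if i = 0 then TOne else TZero) \<in> set pow_eqs"
        by (simp add: pow_eqs_def)
      with eqs have "bf_holds cst rel w (Eq (Var (pow_var 0 i)) (if i = 0 then TOne else TZero))"
        by blast
      then show "w (pow_var 0 i) = pow_coeff 0 i" by simp
    qed
  next
    case (Suc m)
    show ?case
    proof (intro allI impI)
      fix i assume "i < d"
      let ?eq = "Eq (Add (Var (pow_var (Suc m) i)) (Mul (Var (coeff_sys_var i 0)) (Var (pow_var m (d - 1)))))
                    (if i = 0 then TZero else Var (pow_var m (i - 1)))"
      have "?eq \<in> set pow_eqs"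
        using \<open>i < d\<close> Suc.prems unfolding pow_eqs_def
        by (simp only: set_append set_concat set_map set_upt) fastforce
      with eqs have "bf_holds cst rel w ?eq" by blast
      then show "w (pow_var (Suc m) i) = pow_coeff (Suc m) i"
        using Suc \<open>i < d\<close> coeff degree_pos by (auto simp: eq_diff_eq split: if_splits)
    qed
  qed
  then show ?thesis unfolding powers_correct_def by blast
qed

lemma aux_sys_extend:
  assumes w0: "\<And>k i. w0 k i \<in> R"
  obtains w where "\<And>v. w v \<in> R" and "\<forall>h\<in>set aux_sys. bf_holds cst rel w h"
    and "\<And>k i. w (coord_var k i) = w0 k i"
proof -
  define V where "V i = (SOME v. (\<forall>n. v n \<in> R) \<and> v 0 = coeff p i
                                  \<and> (\<forall>f\<in>set (coeff_sys i). bf_holds cst rel v f))" for i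
  have V: "(\<forall>n. V i n \<in> R) \<and> V i 0 = coeff p i \<and> (\<forall>f\<in>set (coeff_sys i). bf_holds cst rel (V i) f)" for i
  proof -
    have "\<exists>v. (\<forall>n. v n \<in> R) \<and> v 0 = coeff p i \<and> (\<forall>f\<in>set (coeff_sys i). bf_holds cst rel v f)"
      using coeff_sys_defines[of "coeff p i" i] coeff_mem[of i] by blast
    then show ?thesis unfolding V_def by (rule someI_ex)
  qed
  define w where "w x = (case prod_decode x of (tag, y) \<Rightarrow> case prod_decode y of (a, b) \<Rightarrow>
      if tag = 0 then w0 a b else if tag = 1 then V a b else pow_coeff a b)" for x
  have [simp]: "w (coord_var k i) = w0 k i" "w (coeff_sys_var i j) = V i j" "w (pow_var m i) = pow_coeff m i"
    for k i j m by (simp_all add: w_def coord_var_def coeff_sys_var_def pow_var_def)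
  have "w x \<in> R" for x
    using w0 V pow_coeff_mem unfolding w_def by (simp split: prod.split)
  moreover have "\<forall>h\<in>set (concat (map (\<lambda>i. map (bf_rename (coeff_sys_var i)) (coeff_sys i)) [0..<d])).
                  bf_holds cst rel w h"
  proof -
    have "w \<circ> coeff_sys_var i = V i" for i by (rule ext) simp
    then show ?thesis using V by (auto simp: bf_holds_rename)
  qed
  moreover have "\<forall>h\<in>set pow_eqs. bf_holds cst rel w h"
    using V by (auto simp: pow_eqs_def)
  ultimately show thesis by (intro that[of w]) (auto simp: aux_sys_def)
qed

theorem solvable_adjoin_iff:
  "solvable (adjoin R \<alpha>) (cst_alpha \<alpha> cst) (rel_alpha R rel) fs \<longleftrightarrow>
   solvable R cst rel (transl_sys d fs @ aux_sys)"
proof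
  assume "solvable (adjoin R \<alpha>) (cst_alpha \<alpha> cst) (rel_alpha R rel) fs"
  then obtain v where v: "\<And>k. v k \<in> adjoin R \<alpha>"
    and sat: "\<forall>f\<in>set fs. bf_holds (cst_alpha \<alpha> cst) (rel_alpha R rel) v f"
    unfolding solvable_def by blast
  have "\<exists>r. (\<forall>i. r i \<in> R) \<and> v k = from_coords r" for k
    by (rule adjoin_eq_from_coords[OF v[of k]]) blast
  then obtain co where "\<forall>k. (\<forall>i. co k i \<in> R) \<and> v k = from_coords (co k)"
    by (metis choice)
  then have co: "\<And>k i. co k i \<in> R" and v_eq: "\<And>k. v k = from_coords (co k)"
    by simp_all
  obtain w where wR: "\<And>x. w x \<in> R" and aux: "\<forall>h\<in>set aux_sys. bf_holds cst rel w h"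
    and w_coord: "\<And>k i. w (coord_var k i) = co k i"
    using aux_sys_extend[of co] co by blast
  have lift: "lift_val w = v"
    by (simp add: lift_val_def w_coord v_eq fun_eq_iff)
  have pc: "powers_correct w" using aux_sys_powers_correct[OF wR aux] .
  have "\<forall>h\<in>set (transl_bf d f). bf_holds cst rel w h" if "f \<in> set fs" for f
    using sat that transl_bf_sem[OF pc wR, of f] lift by simp
  then have "\<forall>h\<in>set (transl_sys d fs). bf_holds cst rel w h"
    by (auto simp: transl_sys_def)
  then show "solvable R cst rel (transl_sys d fs @ aux_sys)"
    unfolding solvable_def using wR aux by auto
next
  assume "solvable R cst rel (transl_sys d fs @ aux_sys)"
  then obtain w where wR: "\<And>x. w x \<in> R"
    and sat: "\<forall>h\<in>set (transl_sys d fs @ aux_sys). bf_holds cst rel w h"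
    unfolding solvable_def by blast
  then have pc: "powers_correct w" by (intro aux_sys_powers_correct) auto
  have "bf_holds (cst_alpha \<alpha> cst) (rel_alpha R rel) (lift_val w) f" if "f \<in> set fs" for f
    unfolding transl_bf_sem[OF pc wR] using sat that by (auto simp: transl_sys_def)
  moreover have "lift_val w k \<in> adjoin R \<alpha>" for k
    unfolding lift_val_def using wR by (rule from_coords_mem_adjoin)
  ultimately show "solvable (adjoin R \<alpha>) (cst_alpha \<alpha> cst) (rel_alpha R rel) fs"
    unfolding solvable_def by blast
qed

end

theorem mainTheorem19:
  fixes R :: "'a::field set" and cst :: "nat \<Rightarrow> 'a" and rel :: "nat \<Rightarrow> 'a list set"
    and \<alpha> :: 'a and p :: "'a poly"
  assumes subring: "0 \<in> R" "1 \<in> R" "\<And>x y. x \<in> R \<Longrightarrow> y \<in> R \<Longrightarrow> x + y \<in> R"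
      "\<And>x y. x \<in> R \<Longrightarrow> y \<in> R \<Longrightarrow> x * y \<in> R" "\<And>x. x \<in> R \<Longrightarrow> - x \<in> R"
    and cst_in: "\<And>i. cst i \<in> R"
    and rel_in: "\<And>i. rel i \<subseteq> lists R"
    and rel_arity: "\<And>i. \<exists>k. \<forall>xs\<in>rel i. length xs = k"
    and H10: "H10_positive R cst rel"
    and integral: "\<exists>q. lead_coeff q = 1 \<and> (\<forall>i. coeff q i \<in> R) \<and> poly q \<alpha> = 0"
    and minpoly_monic: "lead_coeff p = 1"
    and minpoly_root: "poly p \<alpha> = 0"
    and minpoly_min: "\<And>q. q \<noteq> 0 \<Longrightarrow> (\<forall>i. coeff q i \<in> frac_field R) \<Longrightarrow> poly q \<alpha> = 0
                        \<Longrightarrow> degree p \<le> degree q"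
    and minpoly_coeffs: "\<And>i. coeff p i \<in> Sc' R cst rel"
  shows "H10_positive (adjoin R \<alpha>) (cst_alpha \<alpha> cst) (rel_alpha R rel)"
proof -
  interpret adjoin_translation R \<alpha> p cst rel
  proof unfold_locales
    show "coeff p i \<in> R" for i
      using minpoly_coeffs[of i] unfolding Sc'_def by blast
  qed (use subring cst_in rel_in minpoly_monic minpoly_root minpoly_min minpoly_coeffs in auto)
  show ?thesis
    unfolding H10_positive_def
  proof (rule decidable_solvable_transfer)
    show "decidable_nat_set {enc_sys fs | fs. solvable R cst rel fs}"
      using H10 unfolding H10_positive_def .
    show "\<not> solvable R cst rel [Eq TZero TOne]"
      by (simp add: solvable_def)
    show "solvable (adjoin R \<alpha>) (cst_alpha \<alpha> cst) (rel_alpha R rel) fs \<longleftrightarrow>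
          solvable R cst rel (transl_sys d fs @ aux_sys)" for fs
      by (rule solvable_adjoin_iff)
    show "computable 1 (\<lambda>xs. transl_sys_code d (enc_sys aux_sys) (xs ! 0))"
      by (rule computable_transl_sys_code)
    show "transl_sys_code d (enc_sys aux_sys) (enc_sys fs) = Suc (enc_sys (transl_sys d fs @ aux_sys))"
      for fs by (rule transl_sys_code_enc[OF degree_pos])
  qed (rule transl_sys_code_neq_0)
qed

end
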